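(* Let $n\ge2$ and $1\le p<n$. Let $\varphi$ satisfy conditions (1)–(5) and assume $\lim_{t\to0^+}t/\varphi(t)=\infty$. Let $G\subset\mathbb R^n$ be the mushroom domain described below. Then there do not exist $q\in[1,\infty)$ and $C\in\mathbb R$ such that $$\inf_{b\in\mathbb R}\|u-b\|_{L^q(G)}\le C\|\nabla u\|_{L^p(G)}$$ holds for all $u\in L^1_p(G)$.
   Context: Conditions on $\varphi:[0,\infty)\to[0,\infty)$: (1) continuous; (2) strictly increasing; (3) $\varphi(0)=\lim_{t\to0^+}\varphi(t)=0$; (4) there is $C_\varphi\ge1$ with $\varphi(t_1)/t_1\le C_\varphi\varphi(t_2)/t_2$ whenever $0<t_1\le t_2$; (5) there is $C^{\Delta_2}_\varphi\ge1$ with $\varphi(2t)\le C^{\Delta_2}_\varphi\varphi(t)$ for all $t>0$. Mushroom domain: Let $(r_m)_{m\ge1}$ be a decreasing sequence of positive numbers converging to $0$ with $\varphi(r_m)\le r_m$ for all $m$. Let $Q=\{x\in\mathbb R^n: x_i>0\text{ for all }i\}$. For each $m$, let $Q_m$ be a closed cube of side length $2r_m$ and $P_m$ a closed rectangular box with one side of length $r_m$ and the remaining $n-1$ sides of length $2\varphi(r_m)$. Each $P_m$ is placed outside $Q$ with one of its faces of size $(2\varphi(r_m))^{n-1}$ lying in the face $\{x_1=0,\ x_2,\dots,x_n>0\}$ of $Q$ (its side of length $r_m$ perpendicular to that face), and the cube $Q_m$ is attached to the opposite face of $P_m$, forming a "mushroom" $Q_m\cup P_m$; the mushrooms are pairwise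 disjoint and each has distance at least $1$ and at most $4$ from the origin. Let $Q_m^*,P_m^*$ be images of $Q_m,P_m$ under an isometry moving them onto the face $\{x_2=0,\ x_1,x_3,\dots,x_n>0\}$ of $Q$ in the same way (pairwise disjoint, at distance between $1$ and $4$ from the origin). Set $G=\operatorname{int}\big(Q\cup\bigcup_{m=1}^\infty(Q_m\cup P_m\cup Q_m^*\cup P_m^* )\big)$. $L^1_p(G)=\{u\in L^1_{loc}(G):|\nabla u|\in L^p(G)\}$. *)

theory Defs
  imports "HOL-Analysis.Analysis"
begin

definition admissible_phi :: "(real \<Rightarrow> real) \<Rightarrow> bool" where
  "admissible_phi \<phi> \<longleftrightarrow>
     (\<forall>t\<ge>0. \<phi> t \<ge> 0) \<and>
     continuous_on {0..} \<phi> \<and>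
     strict_mono_on {0..} \<phi> \<and>
     \<phi> 0 = 0 \<and> (\<phi> \<longlongrightarrow> 0) (at_right 0) \<and>
     (\<exists>C\<ge>1. \<forall>t1 t2. 0 < t1 \<and> t1 \<le> t2 \<longrightarrow> \<phi> t1 / t1 \<le> C * (\<phi> t2 / t2)) \<and>
     (\<exists>C\<ge>1. \<forall>t>0. \<phi> (2 * t) \<le> C * \<phi> t)"

fun cont_diff :: "nat \<Rightarrow> (real^'n \<Rightarrow> real) \<Rightarrow> bool" where
  "cont_diff 0 f = continuous_on UNIV f"
| "cont_diff (Suc k) f =
     ((\<forall>x. f differentiable (at x)) \<and> continuous_on UNIV f \<and>
      (\<forall>i. cont_diff k (\<lambda>x. frechet_derivative f (at x) (axis i 1))))"

definition partial_deriv :: "'n \<Rightarrow> (real^'n \<Rightarrow> real) \<Rightarrow> real^'n \<Rightarrow> real" where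
  "partial_deriv i f x = frechet_derivative f (at x) (axis i 1)"

definition test_function :: "(real^'n) set \<Rightarrow> (real^'n \<Rightarrow> real) \<Rightarrow> bool" where
  "test_function G \<psi> \<longleftrightarrow> (\<forall>k. cont_diff k \<psi>) \<and>
     compact (closure {x. \<psi> x \<noteq> 0}) \<and> closure {x. \<psi> x \<noteq> 0} \<subseteq> G"

definition loc_integrable :: "(real^'n) set \<Rightarrow> (real^'n \<Rightarrow> real) \<Rightarrow> bool" where
  "loc_integrable G u \<longleftrightarrow> u \<in> borel_measurable (lebesgue_on G) \<and>
     (\<forall>K. compact K \<and> K \<subseteq> G \<longrightarrow> integrable (lebesgue_on K) u)"

definition weak_gradient :: "(real^'n) set \<Rightarrow> (real^'n \<Rightarrow> real) \<Rightarrow> (real^'n \<Rightarrow> real^'n) \<Rightarrow> bool" where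
  "weak_gradient G u g \<longleftrightarrow>
     (\<forall>i. loc_integrable G (\<lambda>x. g x $ i)) \<and>
     (\<forall>\<psi> i. test_function G \<psi> \<longrightarrow>
        (\<integral>x. u x * partial_deriv i \<psi> x \<partial>lebesgue_on G) = - (\<integral>x. g x $ i * \<psi> x \<partial>lebesgue_on G))"

definition Lnorm :: "(real^'n) set \<Rightarrow> real \<Rightarrow> (real^'n \<Rightarrow> real) \<Rightarrow> ennreal" where
  "Lnorm G s f = (let I = (\<integral>\<^sup>+x. ennreal (\<bar>f x\<bar> powr s) \<partial>lebesgue_on G) in
      if I = \<infinity> then \<infinity> else ennreal (enn2real I powr (1 / s)))"

definition in_L1p :: "(real^'n) set \<Rightarrow> real \<Rightarrow> (real^'n \<Rightarrow> real) \<Rightarrow> (real^'n \<Rightarrow> real^'n) \<Rightarrow> bool" where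
  "in_L1p G p u g \<longleftrightarrow> loc_integrable G u \<and> weak_gradient G u g \<and>
     Lnorm G p (\<lambda>x. norm (g x)) < \<infinity>"

definition open_orthant :: "(real^'n) set" where
  "open_orthant = {x. \<forall>i. 0 < x $ i}"

text \<open>Stem P: side r perpendicular to face {x_a = 0}, other sides 2 phi(r), lower corner c.\<close>
definition stem :: "'n \<Rightarrow> real \<Rightarrow> real \<Rightarrow> real^'n \<Rightarrow> (real^'n) set" where
  "stem a r w c = {x. - r \<le> x $ a \<and> x $ a \<le> 0 \<and>
       (\<forall>j. j \<noteq> a \<longrightarrow> c $ j \<le> x $ j \<and> x $ j \<le> c $ j + 2 * w)}"

text \<open>Cap Q: closed cube of side 2r attached to the face {x_a = -r} of the stem.\<close>
definition cap :: "'n \<Rightarrow> real \<Rightarrow> real^'n \<Rightarrow> (real^'n) set" where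
  "cap a r d = {x. - 3 * r \<le> x $ a \<and> x $ a \<le> - r \<and>
       (\<forall>j. j \<noteq> a \<longrightarrow> d $ j \<le> x $ j \<and> x $ j \<le> d $ j + 2 * r)}"

text \<open>Admissible placement: the inner face of the stem lies in the open face
  {x_a = 0, x_j > 0 (j \<noteq> a)} of the orthant, and the outer face of the stem lies
  in a face of the cube.\<close>
definition placement_ok :: "'n \<Rightarrow> real \<Rightarrow> real \<Rightarrow> real^'n \<Rightarrow> real^'n \<Rightarrow> bool" where
  "placement_ok a r w c d \<longleftrightarrow>
     (\<forall>j. j \<noteq> a \<longrightarrow> 0 < c $ j \<and> d $ j \<le> c $ j \<and> c $ j + 2 * w \<le> d $ j + 2 * r)"

definition mushroom :: "'n \<Rightarrow> real \<Rightarrow> real \<Rightarrow> real^'n \<Rightarrow> real^'n \<Rightarrow> (real^'n) set" where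
  "mushroom a r w c d = cap a r d \<union> stem a r w c"

end

theory Submission
  imports Defs
begin

text \<open>For a function \<open>u\<close> that vanishes on a shifted orthant \<open>{x. \<forall>j. L < x$j}\<close>, which has
  infinite measure, \<open>u - \<beta>\<close> has infinite \<open>L\<^sup>q\<close> norm for every \<open>\<beta> \<noteq> 0\<close>, so the infimum over \<open>\<beta>\<close> in the
  inequality is just \<open>\<parallel>u\<parallel>\<^sub>q\<close>. Two families of such functions break the inequality.

  If \<open>n/q > n/p - 1\<close>, a bump of width \<open>R\<close> inside the orthant has \<open>\<parallel>u\<parallel>\<^sub>q \<ge> R\<^bsup>n/q\<^esup>\<close> and
  \<open>\<parallel>\<nabla>u\<parallel>\<^sub>p \<le> c R\<^bsup>n/p - 1\<^esup>\<close>; let \<open>R \<rightarrow> \<infinity>\<close>.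

  If \<open>n/q \<le> n/p - 1\<close>, take \<open>u = 1\<close> on the cap \<open>Q\<^sub>m\<close> and \<open>u = 0\<close> on the orthant, with gradient of size
  \<open>3/r\<^sub>m\<close> supported in the stem \<open>P\<^sub>m\<close>. Then \<open>\<parallel>u\<parallel>\<^sub>q \<ge> (2r\<^sub>m)\<^bsup>n/q\<^esup> \<ge> (2r\<^sub>m)\<^bsup>n/p - 1\<^esup>\<close> while
  \<open>\<parallel>\<nabla>u\<parallel>\<^sub>p \<le> 3 r\<^sub>m\<^sup>-\<^sup>1 (r\<^sub>m (2\<phi>(r\<^sub>m))\<^bsup>n-1\<^esup>)\<^bsup>1/p\<^esup>\<close>, and the ratio of the two bounds grows like
  \<open>(r\<^sub>m/\<phi>(r\<^sub>m))\<^bsup>(n-1)/p\<^esup>\<close>, which is unbounded since \<open>\<phi>(t)/t \<rightarrow> 0\<close>.\<close>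

definition poincare_inequality :: "(real^'n) set \<Rightarrow> real \<Rightarrow> real \<Rightarrow> real \<Rightarrow> bool" where
  "poincare_inequality G p q C \<longleftrightarrow>
     (\<forall>u g. in_L1p G p u g \<longrightarrow>
        (INF \<beta>::real. Lnorm G q (\<lambda>x. u x - \<beta>)) \<le> ennreal C * Lnorm G p (\<lambda>x. norm (g x)))"

lemma integrable_bounded_compact_support:
  fixes f :: "'a::euclidean_space \<Rightarrow> real"
  assumes "f \<in> borel_measurable borel" "compact K" "\<And>x. x \<in> K \<Longrightarrow> \<bar>f x\<bar> \<le> B"
    "\<And>x. x \<notin> K \<Longrightarrow> f x = 0"
  shows "integrable lborel f"
proof -
  have "integrable lborel (\<lambda>x. indicator K x *\<^sub>R B)"
    by (rule borel_integrable_compact) (auto simp: assms intro: continuous_intros)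
  moreover have "AE x in lborel. norm (f x) \<le> norm (indicator K x *\<^sub>R B)"
    using assms(3,4) by (intro AE_I2) (auto simp: indicator_def intro: order_trans[OF _ abs_ge_self])
  moreover have "f \<in> borel_measurable lborel" using assms(1) by simp
  ultimately show ?thesis by (metis Bochner_Integration.integrable_bound)
qed

lemma lborel_integral_translate:
  fixes f :: "'a::euclidean_space \<Rightarrow> real"
  assumes "integrable lborel f"
  shows "integrable lborel (\<lambda>x. f (x + c))" "integral\<^sup>L lborel (\<lambda>x. f (x + c)) = integral\<^sup>L lborel f"
proof -
  have fm: "f \<in> borel_measurable borel" using assms by (simp add: borel_measurable_integrable)
  have "integrable (distr lborel borel ((+) c)) f" using assms by (simp add: lborel_distr_plus)
  then show "integrable lborel (\<lambda>x. f (x + c))"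
    by (subst (asm) integrable_distr_eq) (auto simp: add.commute intro: fm)
  have "integral\<^sup>L lborel (\<lambda>x. f (c + x)) = integral\<^sup>L (distr lborel borel ((+) c)) f"
    by (subst integral_distr) (auto intro: fm)
  then show "integral\<^sup>L lborel (\<lambda>x. f (x + c)) = integral\<^sup>L lborel f"
    by (simp add: lborel_distr_plus add.commute)
qed

lemma abs_difference_quotient_le:
  fixes f F :: "'a::real_normed_vector \<Rightarrow> real"
  assumes deriv: "\<And>x. ((\<lambda>t. f (x + t *\<^sub>R e)) has_real_derivative F x) (at 0)"
    and F_bound: "\<And>x. \<bar>F x\<bar> \<le> B" and h: "0 < h"
  shows "\<bar>(f (x + h *\<^sub>R e) - f x) / h\<bar> \<le> B"
proof -
  have "((\<lambda>s. f (x + s *\<^sub>R e)) has_real_derivative F (x + t *\<^sub>R e)) (at t)" for t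
  proof -
    have "((\<lambda>s. f ((x + t *\<^sub>R e) + s *\<^sub>R e)) has_real_derivative F (x + t *\<^sub>R e)) (at (t + - t))"
      using deriv[of "x + t *\<^sub>R e"] by simp
    then have "((\<lambda>s. f ((x + t *\<^sub>R e) + (s + - t) *\<^sub>R e)) has_real_derivative F (x + t *\<^sub>R e)) (at t)"
      by (subst (asm) DERIV_shift)
    then show ?thesis by (simp add: algebra_simps)
  qed
  then obtain z where "f (x + h *\<^sub>R e) - f (x + 0 *\<^sub>R e) = (h - 0) * F (x + z *\<^sub>R e)"
    using MVT2[of 0 h "\<lambda>s. f (x + s *\<^sub>R e)" "\<lambda>s. F (x + s *\<^sub>R e)"] h by auto
  then show ?thesis using h F_bound[of "x + z *\<^sub>R e"] by simp
qed

text \<open>The difference quotients of \<open>f\<close> along \<open>e\<close> have integral zero by translation invariance,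
  and converge boundedly to \<open>F\<close> by the mean value theorem.\<close>
lemma integral_directional_derivative_eq_0:
  fixes f F :: "'a::euclidean_space \<Rightarrow> real" and e :: 'a
  assumes deriv: "\<And>x. ((\<lambda>t. f (x + t *\<^sub>R e)) has_real_derivative F x) (at 0)"
    and F_bound: "\<And>x. \<bar>F x\<bar> \<le> B"
    and f_cont: "continuous_on UNIV f"
    and F_meas: "F \<in> borel_measurable borel"
    and K: "compact K" and f_supp: "\<And>x. x \<notin> K \<Longrightarrow> f x = 0"
  shows "integral\<^sup>L lborel F = 0"
proof -
  obtain \<rho> where "\<And>x. x \<in> K \<Longrightarrow> norm x \<le> \<rho>"
    using compact_imp_bounded[OF K] unfolding bounded_iff by blast
  then have f_far: "f x = 0" if "norm x > \<rho>" for x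
    using f_supp that by force
  define h :: "nat \<Rightarrow> real" where "h k = 1 / real (Suc k)" for k
  have h: "0 < h k" "h k \<le> 1" for k by (auto simp: h_def field_simps)
  define D where "D k x = (f (x + h k *\<^sub>R e) - f x) / h k" for k x
  have f_meas: "f \<in> borel_measurable borel" using f_cont by (rule borel_measurable_continuous_onI)
  have f_int: "integrable lborel f"
  proof -
    have "integrable lborel (\<lambda>x. indicator (cball 0 \<rho>) x *\<^sub>R f x)"
      by (rule borel_integrable_compact) (auto intro: continuous_on_subset[OF f_cont])
    also have "(\<lambda>x. indicator (cball 0 \<rho>) x *\<^sub>R f x) = f"
      using f_far by (auto simp: indicator_def fun_eq_iff not_le)
    finally show ?thesis .
  qed
  have D_integral: "integral\<^sup>L lborel (D k) = 0" for k
    unfolding D_def using lborel_integral_translate[OF f_int, of "h k *\<^sub>R e"] f_int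
    by (simp add: integral_diff)
  have D_bound: "\<bar>D k x\<bar> \<le> B" for k x
    unfolding D_def using abs_difference_quotient_le[OF deriv F_bound h(1)] .
  have D_supp: "D k x = 0" if "norm x > \<rho> + norm e" for k x
  proof -
    have "norm (h k *\<^sub>R e) \<le> norm e" using h[of k] by (simp add: mult_left_le_one_le)
    then have "norm (x + h k *\<^sub>R e) > \<rho>" using that norm_triangle_ineq2[of x "- (h k *\<^sub>R e)"] by simp
    moreover have "norm x > \<rho>" using that by (smt (verit) norm_ge_zero)
    ultimately show ?thesis by (simp add: D_def f_far)
  qed
  have D_lim: "(\<lambda>k. D k x) \<longlonglongrightarrow> F x" for x
  proof -
    have "((\<lambda>t. (f (x + t *\<^sub>R e) - f (x + 0 *\<^sub>R e)) / (t - 0)) \<longlongrightarrow> F x) (at 0)"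
      using deriv[of x] unfolding has_field_derivative_iff by simp
    moreover have "filterlim h (at 0) sequentially"
      using LIMSEQ_Suc[OF lim_const_over_n[of 1]] h unfolding filterlim_at h_def by auto
    ultimately show ?thesis by (auto dest: filterlim_compose simp: D_def o_def)
  qed
  have "(\<lambda>k. integral\<^sup>L lborel (D k)) \<longlonglongrightarrow> integral\<^sup>L lborel F"
  proof (rule integral_dominated_convergence[where w="\<lambda>x. indicator (cball 0 (\<rho> + norm e)) x *\<^sub>R B"])
    show "integrable lborel (\<lambda>x. indicator (cball 0 (\<rho> + norm e)) x *\<^sub>R B)"
      by (rule borel_integrable_compact) (auto intro: continuous_intros)
    show "AE x in lborel. norm (D k x) \<le> indicator (cball 0 (\<rho> + norm e)) x *\<^sub>R B" for k
      using D_bound D_supp by (auto simp: indicator_def not_le)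
    show "D k \<in> borel_measurable lborel" for k unfolding D_def using f_meas by measurable
  qed (use F_meas D_lim in auto)
  then show ?thesis using D_integral by (simp add: LIMSEQ_const_iff)
qed

lemma integrable_lebesgue_on_if_lborel:
  fixes f :: "'a::euclidean_space \<Rightarrow> real"
  assumes "integrable lborel (\<lambda>x. indicator K x *\<^sub>R f x)" "K \<in> sets lebesgue"
  shows "integrable (lebesgue_on K) f"
proof -
  have "(\<lambda>x. indicator K x *\<^sub>R f x) \<in> borel_measurable lborel"
    using assms(1) by (rule borel_measurable_integrable)
  then have "integrable lebesgue (\<lambda>x. indicator K x *\<^sub>R f x)"
    using assms(1) integrable_completion by blast
  then show ?thesis using assms(2) by (subst integrable_restrict_space) auto
qed

lemma integral_lebesgue_on_eq_lborel:
  fixes f h :: "'a::euclidean_space \<Rightarrow> real"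
  assumes "h \<in> borel_measurable borel" "G \<in> sets lebesgue"
    "\<And>x. indicator G x *\<^sub>R f x = h x"
  shows "integral\<^sup>L (lebesgue_on G) f = integral\<^sup>L lborel h"
proof -
  have "integral\<^sup>L (lebesgue_on G) f = integral\<^sup>L lebesgue (\<lambda>x. indicator G x *\<^sub>R f x)"
    using assms(2) by (subst integral_restrict_space) auto
  also have "\<dots> = integral\<^sup>L lborel h"
    using assms(1,3) by (subst integral_completion) auto
  finally show ?thesis .
qed

lemma loc_integrable_continuous_on:
  fixes u :: "real^'n \<Rightarrow> real"
  assumes "continuous_on V u" "G \<subseteq> V" "G \<in> sets lebesgue"
  shows "loc_integrable G u"
  unfolding loc_integrable_def
proof (intro conjI allI impI)
  show "u \<in> borel_measurable (lebesgue_on G)"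
    using continuous_imp_measurable_on_sets_lebesgue[OF continuous_on_subset] assms by blast
  fix K :: "(real^'n) set" assume K: "compact K \<and> K \<subseteq> G"
  show "integrable (lebesgue_on K) u"
    by (rule integrable_lebesgue_on_if_lborel[OF borel_integrable_compact])
       (use K assms in \<open>auto intro: continuous_on_subset simp: borel_compact\<close>)
qed

lemma loc_integrable_bounded:
  fixes f :: "real^'n \<Rightarrow> real"
  assumes "f \<in> borel_measurable borel" "\<And>x. \<bar>f x\<bar> \<le> B" "G \<in> sets lebesgue"
  shows "loc_integrable G f"
  unfolding loc_integrable_def
proof (intro conjI allI impI)
  show "f \<in> borel_measurable (lebesgue_on G)"
    using assms(1) by (intro measurable_restrict_space1 measurable_completion) simp
  fix K :: "(real^'n) set" assume K: "compact K \<and> K \<subseteq> G"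
  have "(\<lambda>x. indicator K x *\<^sub>R f x) \<in> borel_measurable borel"
    using assms(1) K by (intro borel_measurable_scaleR) (auto intro!: borel_measurable_indicator borel_compact)
  then have "integrable lborel (\<lambda>x. indicator K x *\<^sub>R f x)"
    by (rule integrable_bounded_compact_support[of _ K B]) (use K assms in auto)
  then show "integrable (lebesgue_on K) f"
    using K by (intro integrable_lebesgue_on_if_lborel) (auto simp: borel_compact)
qed

lemma frechet_derivative_eq_0_outside:
  fixes \<psi> :: "'a::real_normed_vector \<Rightarrow> real"
  assumes "closed K" "x \<notin> K" "\<And>y. y \<notin> K \<Longrightarrow> \<psi> y = 0"
  shows "frechet_derivative \<psi> (at x) = (\<lambda>v. 0)"
proof -
  have "(\<psi> has_derivative (\<lambda>v. 0)) (at x)"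
    by (rule has_derivative_transform_within_open[of "\<lambda>y. 0" _ _ _ "- K"])
       (use assms in \<open>auto simp: open_Compl\<close>)
  then show ?thesis by (metis frechet_derivative_at)
qed

lemma has_real_derivative_along:
  fixes f :: "'a::real_normed_vector \<Rightarrow> real"
  assumes "(f has_derivative L) (at x)"
  shows "((\<lambda>t. f (x + t *\<^sub>R e)) has_real_derivative L e) (at 0)"
proof -
  have "((\<lambda>t::real. x + t *\<^sub>R e) has_derivative (\<lambda>t. t *\<^sub>R e)) (at 0)"
    by (auto intro!: derivative_eq_intros)
  from diff_chain_at[OF this] assms
  have "((\<lambda>t. f (x + t *\<^sub>R e)) has_derivative (\<lambda>t. L (t *\<^sub>R e))) (at 0)"
    by (simp add: o_def)
  moreover have "(\<lambda>t. L (t *\<^sub>R e)) = (*) (L e)"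
    using has_derivative_linear[OF assms] by (auto simp: linear_scale fun_eq_iff)
  ultimately show ?thesis unfolding has_field_derivative_def by simp
qed

lemma has_derivative_mult_vanishing_outside:
  fixes u \<psi> :: "'a::real_normed_vector \<Rightarrow> real"
  assumes V: "open V" "closed K" "K \<subseteq> V"
    and \<psi>_supp: "\<And>y. y \<notin> K \<Longrightarrow> \<psi> y = 0" and \<psi>_diff: "\<psi> differentiable (at x)"
    and du: "\<And>y. y \<in> V \<Longrightarrow> (u has_derivative u' y) (at y)"
  shows "((\<lambda>y. u y * \<psi> y) has_derivative
           (\<lambda>v. (if x \<in> V then u x * frechet_derivative \<psi> (at x) v + u' x v * \<psi> x else 0))) (at x)"
proof (cases "x \<in> V")
  case True
  with has_derivative_mult[OF du[OF True] frechet_derivative_works[THEN iffD1, OF \<psi>_diff]]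
  show ?thesis by (simp add: mult.commute)
next
  case False
  then have "x \<notin> K" using V by blast
  have "((\<lambda>y. u y * \<psi> y) has_derivative (\<lambda>v. 0)) (at x)"
    by (rule has_derivative_transform_within_open[of "\<lambda>y. 0" _ _ _ "- K"])
       (use \<open>x \<notin> K\<close> V \<psi>_supp in \<open>auto simp: open_Compl\<close>)
  with False show ?thesis by simp
qed

lemma has_real_derivative_mult_along_axis:
  fixes u \<psi> :: "real^'n \<Rightarrow> real" and g :: "real^'n \<Rightarrow> real^'n"
  assumes V: "open V" "closed K" "K \<subseteq> V"
    and \<psi>_supp: "\<And>y. y \<notin> K \<Longrightarrow> \<psi> y = 0" and \<psi>_diff: "\<psi> differentiable (at x)"
    and du: "\<And>y. y \<in> V \<Longrightarrow> (u has_derivative (\<lambda>v. g y \<bullet> v)) (at y)"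
  shows "((\<lambda>t. u (x + t *\<^sub>R axis i 1) * \<psi> (x + t *\<^sub>R axis i 1)) has_real_derivative
           (if x \<in> V then u x else 0) * partial_deriv i \<psi> x + g x $ i * \<psi> x) (at 0)"
proof -
  have eq: "(if x \<in> V then u x * frechet_derivative \<psi> (at x) (axis i 1) + (g x \<bullet> axis i 1) * \<psi> x else 0)
      = (if x \<in> V then u x else 0) * partial_deriv i \<psi> x + g x $ i * \<psi> x"
    using frechet_derivative_eq_0_outside[OF V(2) _ \<psi>_supp, of x] \<psi>_supp[of x] V(3)
    by (cases "x \<in> K") (auto simp: partial_deriv_def inner_axis)
  from has_real_derivative_along[OF has_derivative_mult_vanishing_outside[OF V \<psi>_supp \<psi>_diff du],
      of "axis i 1"]
  show ?thesis unfolding eq .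
qed

lemma test_functionD:
  assumes "test_function G \<psi>"
  defines "K \<equiv> closure {x. \<psi> x \<noteq> 0}"
  shows "compact K" "K \<subseteq> G" "\<And>x. x \<notin> K \<Longrightarrow> \<psi> x = 0" "\<And>x. x \<notin> K \<Longrightarrow> partial_deriv i \<psi> x = 0"
    "\<And>x. \<psi> differentiable (at x)" "continuous_on UNIV \<psi>" "continuous_on UNIV (partial_deriv i \<psi>)"
proof -
  have "compact K \<and> K \<subseteq> G" using assms(1) unfolding test_function_def K_def by (rule conjunct2)
  then show K: "compact K" "K \<subseteq> G" by simp_all
  show \<psi>_supp: "\<psi> x = 0" if "x \<notin> K" for x
    using that closure_subset[of "{x. \<psi> x \<noteq> 0}"] unfolding K_def by auto
  show "partial_deriv i \<psi> x = 0" if "x \<notin> K" for x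
    using frechet_derivative_eq_0_outside[OF compact_imp_closed[OF K(1)] that \<psi>_supp]
    by (simp add: partial_deriv_def)
  have "cont_diff (Suc 0) \<psi>" using assms unfolding test_function_def by blast
  then show "\<And>x. \<psi> differentiable (at x)" "continuous_on UNIV \<psi>"
    and "continuous_on UNIV (partial_deriv i \<psi>)"
    unfolding partial_deriv_def[abs_def] by auto
qed

lemma bounded_integrable_mult_compact_support:
  fixes f h :: "'a::euclidean_space \<Rightarrow> real"
  assumes K: "compact K" and meas: "(\<lambda>x. f x * h x) \<in> borel_measurable borel"
    and f: "\<And>x. x \<in> K \<Longrightarrow> \<bar>f x\<bar> \<le> M" and h: "continuous_on K h" "\<And>x. x \<notin> K \<Longrightarrow> h x = 0"
  shows "(\<exists>M'. \<forall>x. \<bar>f x * h x\<bar> \<le> M') \<and> integrable lborel (\<lambda>x. f x * h x)"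
proof -
  obtain Mh where Mh: "0 \<le> Mh" "\<And>x. x \<in> K \<Longrightarrow> norm (h x) \<le> Mh"
    using continuous_on_compact_bound[OF K h(1)] by blast
  have bound: "\<bar>f x * h x\<bar> \<le> \<bar>M\<bar> * Mh" for x
  proof (cases "x \<in> K")
    case True
    then show ?thesis
      using f[OF True] Mh(2)[OF True] unfolding abs_mult real_norm_def by (intro mult_mono) auto
  qed (use h(2) Mh(1) in simp)
  moreover have "integrable lborel (\<lambda>x. f x * h x)"
    by (rule integrable_bounded_compact_support[OF meas K bound]) (simp add: h(2))
  ultimately show ?thesis by blast
qed

text \<open>The product \<open>u \<psi>\<close> has compact support, so the integral of its derivative along the
  coordinate \<open>i\<close> vanishes; outside \<open>V\<close>, \<open>u\<close> is replaced by \<open>0\<close>.\<close>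
lemma integration_by_parts_test_function:
  fixes u :: "real^'n \<Rightarrow> real" and g :: "real^'n \<Rightarrow> real^'n"
  assumes V: "open V" "G \<subseteq> V" "open G"
    and du: "\<And>x. x \<in> V \<Longrightarrow> (u has_derivative (\<lambda>v. g x \<bullet> v)) (at x)"
    and g_bound: "\<And>x. norm (g x) \<le> B" and g_meas: "g \<in> borel_measurable borel"
    and \<psi>: "test_function G \<psi>"
  shows "(\<integral>x. u x * partial_deriv i \<psi> x \<partial>lebesgue_on G) = - (\<integral>x. g x $ i * \<psi> x \<partial>lebesgue_on G)"
proof -
  define K where "K = closure {x. \<psi> x \<noteq> 0}"
  note K = test_functionD[OF \<psi>, folded K_def]
  note d\<psi> = K(4)[where i=i] K(7)[where i=i]
  have u_cont: "continuous_on V u"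
    using du V(1) by (metis continuous_on_eq_continuous_at has_derivative_continuous)
  define uV where "uV x = (if x \<in> V then u x else 0)" for x
  define A where "A x = uV x * partial_deriv i \<psi> x" for x
  define B' where "B' x = g x $ i * \<psi> x" for x
  have A_meas: "A \<in> borel_measurable borel"
    unfolding A_def uV_def using V(1) u_cont borel_measurable_continuous_onI[OF d\<psi>(2)]
    by (intro borel_measurable_times borel_measurable_continuous_on_if) (auto simp: borel_open)
  have "(\<lambda>x. g x $ i) \<in> borel_measurable borel"
    using borel_measurable_inner[OF g_meas borel_measurable_const[of "axis i 1"]] by (simp add: inner_axis)
  then have B'_meas: "B' \<in> borel_measurable borel"
    unfolding B'_def using borel_measurable_continuous_onI[OF K(6)] by (rule borel_measurable_times)
  obtain Mu where Mu: "\<And>x. x \<in> K \<Longrightarrow> norm (u x) \<le> Mu"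
    using continuous_on_compact_bound[OF K(1) continuous_on_subset[OF u_cont]] K(2) V(2) by blast
  have "(\<exists>M. \<forall>x. \<bar>A x\<bar> \<le> M) \<and> integrable lborel A"
    unfolding A_def
  proof (rule bounded_integrable_mult_compact_support[OF K(1) A_meas[unfolded A_def]])
    show "\<bar>uV x\<bar> \<le> Mu" if "x \<in> K" for x
      using Mu[OF that] that K(2) V(2) by (auto simp: uV_def)
  qed (use continuous_on_subset[OF d\<psi>(2)] d\<psi>(1) in auto)
  then obtain MA where MA: "\<And>x. \<bar>A x\<bar> \<le> MA" and A_int: "integrable lborel A" by blast
  have "(\<exists>M. \<forall>x. \<bar>B' x\<bar> \<le> M) \<and> integrable lborel B'"
    unfolding B'_def
  proof (rule bounded_integrable_mult_compact_support[OF K(1) B'_meas[unfolded B'_def]])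
    show "\<bar>g x $ i\<bar> \<le> B" for x
      using g_bound[of x] component_le_norm_cart[of "g x" i] by simp
  qed (use continuous_on_subset[OF K(6)] K(3) in auto)
  then obtain MB where MB: "\<And>x. \<bar>B' x\<bar> \<le> MB" and B'_int: "integrable lborel B'" by blast
  have "integral\<^sup>L lborel (\<lambda>x. A x + B' x) = 0"
  proof (rule integral_directional_derivative_eq_0[where f="\<lambda>x. u x * \<psi> x" and e="axis i 1" and K=K])
    show "((\<lambda>t. u (x + t *\<^sub>R axis i 1) * \<psi> (x + t *\<^sub>R axis i 1))
        has_real_derivative A x + B' x) (at 0)" for x
      unfolding A_def B'_def uV_def
      by (rule has_real_derivative_mult_along_axis[OF V(1) compact_imp_closed[OF K(1)]])
         (use K V du in auto)
    show "\<bar>A x + B' x\<bar> \<le> MA + MB" for x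
      using MA[of x] MB[of x] by linarith
    have "K \<subseteq> V" using K(2) V(2) by blast
    from has_derivative_mult_vanishing_outside[OF V(1) compact_imp_closed[OF K(1)] this K(3) K(5) du]
    show "continuous_on UNIV (\<lambda>x. u x * \<psi> x)"
      by (intro continuous_at_imp_continuous_on ballI has_derivative_continuous)
    show "(\<lambda>x. A x + B' x) \<in> borel_measurable borel"
      using A_meas B'_meas by measurable
    show "u x * \<psi> x = 0" if "x \<notin> K" for x
      using K(3)[OF that] by simp
  qed (rule K(1))
  then have "integral\<^sup>L lborel A + integral\<^sup>L lborel B' = 0"
    using A_int B'_int by simp
  moreover have "(\<integral>x. u x * partial_deriv i \<psi> x \<partial>lebesgue_on G) = integral\<^sup>L lborel A"
    by (rule integral_lebesgue_on_eq_lborel[OF A_meas])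
       (use V K(2) d\<psi>(1) in \<open>auto simp: A_def uV_def indicator_def borel_open\<close>)
  moreover have "(\<integral>x. g x $ i * \<psi> x \<partial>lebesgue_on G) = integral\<^sup>L lborel B'"
    by (rule integral_lebesgue_on_eq_lborel[OF B'_meas])
       (use V K(2,3) in \<open>auto simp: B'_def indicator_def borel_open\<close>)
  ultimately show ?thesis by simp
qed

lemma in_L1p_if_has_derivative:
  fixes u :: "real^'n \<Rightarrow> real" and g :: "real^'n \<Rightarrow> real^'n"
  assumes V: "open V" "G \<subseteq> V" "open G"
    and du: "\<And>x. x \<in> V \<Longrightarrow> (u has_derivative (\<lambda>v. g x \<bullet> v)) (at x)"
    and g_bound: "\<And>x. norm (g x) \<le> B" and g_meas: "g \<in> borel_measurable borel"
    and g_Lp: "Lnorm G p (\<lambda>x. norm (g x)) < \<infinity>"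
  shows "in_L1p G p u g"
proof -
  have G_meas: "G \<in> sets lebesgue" using V(3) by (simp add: borel_open)
  have "continuous_on V u"
    using du V(1) by (metis continuous_on_eq_continuous_at has_derivative_continuous)
  then have "loc_integrable G u"
    using V(2) G_meas by (rule loc_integrable_continuous_on)
  moreover have "loc_integrable G (\<lambda>x. g x $ i)" for i
    using borel_measurable_inner[OF g_meas borel_measurable_const[of "axis i 1"]]
      g_bound[THEN order_trans[OF component_le_norm_cart]] G_meas
    by (intro loc_integrable_bounded) (auto simp: inner_axis)
  ultimately show ?thesis
    using integration_by_parts_test_function[OF V du g_bound g_meas] g_Lp
    unfolding in_L1p_def weak_gradient_def by blast
qed

lemma Lnorm_ge_measure:
  fixes f :: "real^'n \<Rightarrow> real"
  assumes G: "G \<in> sets lebesgue" and S: "S \<subseteq> G" "S \<in> sets lebesgue" "emeasure lebesgue S = ennreal V"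
    and s: "0 < s" and V: "0 \<le> V" and f: "\<And>x. x \<in> S \<Longrightarrow> 1 \<le> \<bar>f x\<bar>"
  shows "ennreal (V powr (1 / s)) \<le> Lnorm G s f"
proof -
  let ?I = "\<integral>\<^sup>+x. ennreal (\<bar>f x\<bar> powr s) \<partial>lebesgue_on G"
  have "ennreal V = emeasure (lebesgue_on G) S"
    using G S by (simp add: emeasure_restrict_space)
  also have "\<dots> = (\<integral>\<^sup>+x. indicator S x \<partial>lebesgue_on G)"
    using G S by (subst nn_integral_indicator) (auto simp: sets_restrict_space_iff)
  also have "\<dots> \<le> ?I"
    using f s by (intro nn_integral_mono) (auto simp: indicator_def ge_one_powr_ge_zero)
  finally have le: "ennreal V \<le> ?I" .
  show ?thesis
  proof (cases "?I = \<infinity>")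
    case False
    then have "V \<le> enn2real ?I"
      using enn2real_mono[OF le] V by (simp add: top.not_eq_extremum)
    then have "V powr (1 / s) \<le> enn2real ?I powr (1 / s)"
      using V s by (intro powr_mono2) auto
    then show ?thesis using False by (simp add: Lnorm_def)
  qed (simp add: Lnorm_def)
qed

lemma Lnorm_le_measure:
  fixes f :: "real^'n \<Rightarrow> real"
  assumes G: "G \<in> sets lebesgue" and S: "S \<in> sets lebesgue" "emeasure lebesgue S = ennreal V"
    and s: "0 < s" and M: "0 \<le> M" and V: "0 \<le> V"
    and f_bound: "\<And>x. x \<in> G \<Longrightarrow> \<bar>f x\<bar> \<le> M" and f_supp: "\<And>x. x \<in> G \<Longrightarrow> f x \<noteq> 0 \<Longrightarrow> x \<in> S"
  shows "Lnorm G s f \<le> ennreal (M * V powr (1 / s))"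
proof -
  let ?I = "\<integral>\<^sup>+x. ennreal (\<bar>f x\<bar> powr s) \<partial>lebesgue_on G"
  have "?I = (\<integral>\<^sup>+x. ennreal (\<bar>f x\<bar> powr s) * indicator G x \<partial>lebesgue)"
    using G by (subst nn_integral_restrict_space) auto
  also have "\<dots> \<le> (\<integral>\<^sup>+x. ennreal (M powr s) * indicator S x \<partial>lebesgue)"
  proof (intro nn_integral_mono)
    fix x
    have "\<bar>f x\<bar> powr s \<le> M powr s" if "x \<in> G"
      using f_bound[OF that] s by (intro powr_mono2) auto
    then show "ennreal (\<bar>f x\<bar> powr s) * indicator G x \<le> ennreal (M powr s) * indicator S x"
      using f_supp[of x] by (cases "x \<in> G"; cases "f x = 0") (auto simp: indicator_def)
  qed
  also have "\<dots> = ennreal (M powr s * V)"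
    using S M V by (subst nn_integral_cmult_indicator) (auto simp: ennreal_mult)
  finally have le: "?I \<le> ennreal (M powr s * V)" .
  then have "?I \<noteq> \<infinity>" by (auto simp: top_unique)
  moreover have "enn2real ?I \<le> M powr s * V"
    using le M V by (intro enn2real_leI) auto
  then have "enn2real ?I powr (1 / s) \<le> (M powr s * V) powr (1 / s)"
    using s by (intro powr_mono2) auto
  moreover have "(M powr s * V) powr (1 / s) = M * V powr (1 / s)"
    using M V s by (simp add: powr_mult powr_powr)
  ultimately show ?thesis by (simp add: Lnorm_def ennreal_leI)
qed

lemma INF_Lnorm_shift_eq:
  fixes u :: "real^'n \<Rightarrow> real"
  assumes G: "G \<in> sets lebesgue" and T: "T \<subseteq> G" "T \<in> sets lebesgue" "emeasure lebesgue T = \<infinity>"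
    and u: "\<And>x. x \<in> T \<Longrightarrow> u x = 0"
  shows "(INF \<beta>::real. Lnorm G q (\<lambda>x. u x - \<beta>)) = Lnorm G q u"
proof (rule antisym)
  show "(INF \<beta>::real. Lnorm G q (\<lambda>x. u x - \<beta>)) \<le> Lnorm G q u"
    by (rule INF_lower2[of 0]) auto
  show "Lnorm G q u \<le> (INF \<beta>::real. Lnorm G q (\<lambda>x. u x - \<beta>))"
  proof (rule INF_greatest)
    fix \<beta> :: real
    show "Lnorm G q u \<le> Lnorm G q (\<lambda>x. u x - \<beta>)"
    proof (cases "\<beta> = 0")
      case False
      have "\<infinity> = ennreal (\<bar>\<beta>\<bar> powr q) * emeasure (lebesgue_on G) T"
        using False T G by (simp add: emeasure_restrict_space ennreal_mult_top)
      also have "\<dots> = (\<integral>\<^sup>+x. ennreal (\<bar>\<beta>\<bar> powr q) * indicator T x \<partial>lebesgue_on G)"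
        using G T by (subst nn_integral_cmult_indicator) (auto simp: sets_restrict_space_iff)
      also have "\<dots> \<le> (\<integral>\<^sup>+x. ennreal (\<bar>u x - \<beta>\<bar> powr q) \<partial>lebesgue_on G)"
        using u by (intro nn_integral_mono) (auto simp: indicator_def)
      finally show ?thesis by (simp add: Lnorm_def top_unique)
    qed simp
  qed
qed

lemma emeasure_lebesgue_box_cart:
  fixes l u :: "real^'n"
  assumes "\<And>i. l $ i \<le> u $ i"
  shows "emeasure lebesgue (box l u) = ennreal (\<Prod>i\<in>UNIV. u $ i - l $ i)"
    and "emeasure lebesgue (cbox l u) = ennreal (\<Prod>i\<in>UNIV. u $ i - l $ i)"
proof -
  have "cbox l u \<noteq> {}" using assms by (auto simp: interval_ne_empty_cart)
  then have cbox: "emeasure lborel (cbox l u) = ennreal (\<Prod>i\<in>UNIV. u $ i - l $ i)"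
    using emeasure_lborel_cbox_finite[of l u] content_cbox_cart[of l u]
    by (simp add: emeasure_eq_ennreal_measure less_top)
  then show "emeasure lebesgue (cbox l u) = ennreal (\<Prod>i\<in>UNIV. u $ i - l $ i)"
    by (simp add: emeasure_completion)
  show "emeasure lebesgue (box l u) = ennreal (\<Prod>i\<in>UNIV. u $ i - l $ i)"
    using cbox by (simp add: emeasure_completion emeasure_lborel_box_eq emeasure_lborel_cbox_eq)
qed

lemma open_shifted_orthant: "open {x::real^'n. \<forall>j. L < x $ j}"
proof -
  have "{x::real^'n. \<forall>j. L < x $ j} = (\<Inter>j. {x. L < x $ j})" by auto
  moreover have "open (\<Inter>j. {x::real^'n. L < x $ j})"
    by (intro open_INT) (auto intro!: open_Collect_less continuous_intros)
  ultimately show ?thesis by simp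
qed

lemma emeasure_shifted_orthant: "emeasure lebesgue {x::real^'n. \<forall>j. L < x $ j} = \<infinity>"
proof (rule ccontr)
  let ?T = "{x::real^'n. \<forall>j. L < x $ j}"
  assume "emeasure lebesgue ?T \<noteq> \<infinity>"
  then obtain k :: nat where k: "emeasure lebesgue ?T < of_nat k"
    using ennreal_Ex_less_of_nat[of "emeasure lebesgue ?T"] by (auto simp: less_top)
  have "real k \<le> (real k + 1) ^ CARD('n)"
    using self_le_power[of "real k + 1" "CARD('n)"] by simp
  then have "of_nat k \<le> ennreal ((real k + 1) ^ CARD('n))"
    by (simp add: ennreal_of_nat_eq_real_of_nat)
  also have "\<dots> = emeasure lebesgue (box (\<chi> j. L) (\<chi> j. L + real k + 1 :: real^'n))"
    by (subst emeasure_lebesgue_box_cart) auto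
  also have "\<dots> \<le> emeasure lebesgue ?T"
  proof (rule emeasure_mono)
    show "box (\<chi> j. L) (\<chi> j. L + real k + 1) \<subseteq> ?T" by (auto simp: mem_box_cart)
    show "?T \<in> sets lebesgue" using open_shifted_orthant[of L] by (simp add: borel_open)
  qed
  finally show False using k by simp
qed

lemma poincare_inequality_test_bound:
  fixes u :: "real^'n \<Rightarrow> real" and g :: "real^'n \<Rightarrow> real^'n"
  assumes P: "poincare_inequality G p q C" and G: "open G" "open_orthant \<subseteq> G"
    and L: "0 \<le> L" and u_zero: "\<And>x. \<forall>j. L < x $ j \<Longrightarrow> u x = 0" and u: "in_L1p G p u g"
    and X: "ennreal X \<le> Lnorm G q u" and Y: "Lnorm G p (\<lambda>x. norm (g x)) \<le> ennreal Y" "0 \<le> Y"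
  shows "X \<le> max C 0 * Y"
proof -
  let ?T = "{x::real^'n. \<forall>j. L < x $ j}"
  have "?T \<subseteq> G"
    using L G(2) unfolding open_orthant_def by (auto intro: le_less_trans)
  then have INF_eq: "(INF \<beta>::real. Lnorm G q (\<lambda>x. u x - \<beta>)) = Lnorm G q u"
    using G open_shifted_orthant[of L] emeasure_shifted_orthant[of L] u_zero
    by (intro INF_Lnorm_shift_eq[where T="?T"]) (auto simp: borel_open)
  have "(INF \<beta>::real. Lnorm G q (\<lambda>x. u x - \<beta>)) \<le> ennreal C * Lnorm G p (\<lambda>x. norm (g x))"
    using P u unfolding poincare_inequality_def by blast
  then have "Lnorm G q u \<le> ennreal C * Lnorm G p (\<lambda>x. norm (g x))"
    unfolding INF_eq .
  also have "\<dots> \<le> ennreal C * ennreal Y"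
    using Y(1) by (rule mult_left_mono) simp
  also have "\<dots> = ennreal (max C 0 * Y)"
    using Y(2) by (cases "C \<ge> 0") (simp_all add: ennreal_mult ennreal_neg)
  finally have "ennreal X \<le> ennreal (max C 0 * Y)"
    using X by (rule order_trans[rotated])
  then show ?thesis
    using Y(2) by (simp add: ennreal_le_iff)
qed

section \<open>Smooth step and bump functions\<close>

lemma has_real_derivative_glue:
  fixes f fa fb :: "real \<Rightarrow> real"
  assumes d1: "(fa has_real_derivative D) (at a)" and d2: "(fb has_real_derivative D) (at a)"
    and ep: "\<epsilon> > 0"
    and e1: "\<And>x. a - \<epsilon> < x \<Longrightarrow> x \<le> a \<Longrightarrow> f x = fa x"
    and e2: "\<And>x. a \<le> x \<Longrightarrow> x < a + \<epsilon> \<Longrightarrow> f x = fb x"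
  shows "(f has_real_derivative D) (at a)"
proof -
  have q1: "((\<lambda>y. (fa y - fa a) / (y - a)) \<longlongrightarrow> D) (at a)" using d1 by (simp add: has_field_derivative_iff)
  have q2: "((\<lambda>y. (fb y - fb a) / (y - a)) \<longlongrightarrow> D) (at a)" using d2 by (simp add: has_field_derivative_iff)
  have "((\<lambda>y. (f y - f a) / (y - a)) \<longlongrightarrow> D) (at_left a)"
  proof (rule Lim_transform_eventually)
    show "((\<lambda>y. (fa y - fa a) / (y - a)) \<longlongrightarrow> D) (at_left a)"
      using q1 filterlim_at_split by blast
    show "\<forall>\<^sub>F y in at_left a. (fa y - fa a) / (y - a) = (f y - f a) / (y - a)"
      unfolding eventually_at_filter eventually_nhds_metric
      by (rule exI[of _ \<epsilon>]) (auto simp: ep e1 dist_real_def)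
  qed
  moreover have "((\<lambda>y. (f y - f a) / (y - a)) \<longlongrightarrow> D) (at_right a)"
  proof (rule Lim_transform_eventually)
    show "((\<lambda>y. (fb y - fb a) / (y - a)) \<longlongrightarrow> D) (at_right a)"
      using q2 filterlim_at_split by blast
    show "\<forall>\<^sub>F y in at_right a. (fb y - fb a) / (y - a) = (f y - f a) / (y - a)"
      unfolding eventually_at_filter eventually_nhds_metric
      by (rule exI[of _ \<epsilon>]) (auto simp: ep e2 dist_real_def)
  qed
  ultimately show ?thesis by (simp add: has_field_derivative_iff filterlim_at_split)
qed

text \<open>The cubic has slope \<open>0\<close> at both ends of \<open>[0, 1]\<close>, so the clamped step is \<open>C\<^sup>1\<close>.\<close>
definition smoothstep :: "real \<Rightarrow> real" where
  "smoothstep s = (if s \<le> 0 then 0 else if s \<ge> 1 then 1 else 3 * s^2 - 2 * s^3)"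

definition smoothstep' :: "real \<Rightarrow> real" where
  "smoothstep' s = (if s \<le> 0 then 0 else if s \<ge> 1 then 0 else 6 * s - 6 * s^2)"

lemma has_real_derivative_smoothstep: "(smoothstep has_real_derivative smoothstep' s) (at s)"
proof -
  have P: "((\<lambda>s. 3 * s^2 - 2 * s^3) has_real_derivative (6 * s - 6 * s^2)) (at s)" for s :: real
    by (auto intro!: derivative_eq_intros simp: power2_eq_square)
  consider "s < 0" | "s = 0" | "0 < s \<and> s < 1" | "s = 1" | "s > 1" by linarith
  then show ?thesis
  proof cases
    case 1
    show ?thesis
      by (rule has_field_derivative_transform_within_open[of "\<lambda>_. 0" _ _ "{..<0}"])
         (use 1 in \<open>auto simp: smoothstep_def smoothstep'_def\<close>)
  next
    case 2
    show ?thesis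
      by (rule has_real_derivative_glue[where fa="\<lambda>_. 0" and fb="\<lambda>s. 3 * s^2 - 2 * s^3" and \<epsilon>=1])
         (use 2 P[of 0] in \<open>auto simp: smoothstep_def smoothstep'_def\<close>)
  next
    case 3
    show ?thesis
      by (rule has_field_derivative_transform_within_open[of "\<lambda>s. 3 * s^2 - 2 * s^3" _ _ "{0<..<1}"])
         (use 3 P[of s] in \<open>auto simp: smoothstep_def smoothstep'_def\<close>)
  next
    case 4
    show ?thesis
      by (rule has_real_derivative_glue[where fb="\<lambda>_. 1" and fa="\<lambda>s. 3 * s^2 - 2 * s^3" and \<epsilon>=1])
         (use 4 P[of 1] in \<open>auto simp: smoothstep_def smoothstep'_def\<close>)
  next
    case 5
    show ?thesis
      by (rule has_field_derivative_transform_within_open[of "\<lambda>_. 1" _ _ "{1<..}"])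
         (use 5 in \<open>auto simp: smoothstep_def smoothstep'_def\<close>)
  qed
qed

lemma abs_smoothstep'_le: "\<bar>smoothstep' s\<bar> \<le> 2"
proof -
  have "\<bar>6 * s - 6 * s^2\<bar> \<le> 2" if "0 < s" "s < 1"
  proof -
    have "6 * s - 6 * s^2 = 6 * (s * (1 - s))" by (simp add: power2_eq_square algebra_simps)
    moreover have "s * (1 - s) \<le> 1/4"
    proof -
      have "s * (1 - s) = 1/4 - (s - 1/2)^2" by (simp add: power2_eq_square algebra_simps)
      then show ?thesis using zero_le_power2[of "s - 1/2"] by linarith
    qed
    moreover have "0 \<le> s * (1 - s)" using that by simp
    ultimately show ?thesis by simp
  qed
  then show ?thesis by (auto simp: smoothstep'_def)
qed

lemma smoothstep_range: "0 \<le> smoothstep s" "smoothstep s \<le> 1"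
proof -
  have "0 \<le> 3 * s^2 - 2 * s^3 \<and> 3 * s^2 - 2 * s^3 \<le> 1" if "0 < s" "s < 1"
  proof -
    have a: "3 * s^2 - 2 * s^3 = s^2 * (3 - 2 * s)" by (simp add: power2_eq_square power3_eq_cube algebra_simps)
    have b: "1 - (3 * s^2 - 2 * s^3) = (1 - s)^2 * (1 + 2 * s)"
      by (simp add: power2_eq_square power3_eq_cube algebra_simps)
    have "0 \<le> s^2 * (3 - 2 * s)" using that by simp
    moreover have "0 \<le> (1 - s)^2 * (1 + 2 * s)" using that by simp
    ultimately show ?thesis using a b by linarith
  qed
  then show "0 \<le> smoothstep s" "smoothstep s \<le> 1" by (auto simp: smoothstep_def)
qed

lemma continuous_on_smoothstep': "continuous_on UNIV smoothstep'"
proof -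
  have eq: "smoothstep' = (\<lambda>s. 6 * (max 0 (min 1 s)) - 6 * (max 0 (min 1 s))^2)"
    by (auto simp: smoothstep'_def fun_eq_iff max_def min_def)
  show ?thesis unfolding eq by (intro continuous_intros)
qed

lemma smoothstep_eq_0: "s \<le> 0 \<Longrightarrow> smoothstep s = 0 \<and> smoothstep' s = 0"
  by (simp add: smoothstep_def smoothstep'_def)

lemma smoothstep_eq_1: "s \<ge> 1 \<Longrightarrow> smoothstep s = 1 \<and> smoothstep' s = 0"
  by (simp add: smoothstep_def smoothstep'_def)

lemma continuous_on_smoothstep: "continuous_on UNIV smoothstep"
  using has_real_derivative_smoothstep by (meson DERIV_isCont continuous_at_imp_continuous_on)

definition plateau :: "real \<Rightarrow> real" where
  "plateau s = smoothstep (s - 1) * smoothstep (4 - s)"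

definition plateau' :: "real \<Rightarrow> real" where
  "plateau' s = smoothstep' (s - 1) * smoothstep (4 - s) - smoothstep (s - 1) * smoothstep' (4 - s)"

lemma has_real_derivative_plateau: "(plateau has_real_derivative plateau' s) (at s)"
proof -
  have a: "((\<lambda>s. smoothstep (s - 1)) has_real_derivative smoothstep' (s - 1) * 1) (at s)"
    by (rule DERIV_chain2[OF has_real_derivative_smoothstep]) (auto intro!: derivative_eq_intros)
  have b: "((\<lambda>s. smoothstep (4 - s)) has_real_derivative smoothstep' (4 - s) * (- 1)) (at s)"
    by (rule DERIV_chain2[OF has_real_derivative_smoothstep]) (auto intro!: derivative_eq_intros)
  have "((\<lambda>s. smoothstep (s - 1) * smoothstep (4 - s)) has_real_derivative
      smoothstep (s - 1) * (smoothstep' (4 - s) * (- 1)) + smoothstep' (s - 1) * 1 * smoothstep (4 - s)) (at s)"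
    using DERIV_mult'[OF a b] by simp
  then show ?thesis unfolding plateau_def[abs_def] plateau'_def by (simp add: algebra_simps)
qed

lemma plateau_range: "0 \<le> plateau s" "plateau s \<le> 1"
  using smoothstep_range[of "s - 1"] smoothstep_range[of "4 - s"]
  by (auto simp: plateau_def intro: mult_nonneg_nonneg mult_le_one)

lemma abs_plateau'_le: "\<bar>plateau' s\<bar> \<le> 4"
proof -
  have "\<bar>smoothstep' (s - 1) * smoothstep (4 - s)\<bar> \<le> 2"
    using abs_smoothstep'_le[of "s - 1"] smoothstep_range[of "4 - s"]
    by (simp add: abs_mult) (metis abs_ge_zero mult_right_le_one_le order_trans abs_of_nonneg)
  moreover have "\<bar>smoothstep (s - 1) * smoothstep' (4 - s)\<bar> \<le> 2"
    using abs_smoothstep'_le[of "4 - s"] smoothstep_range[of "s - 1"]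
    by (simp add: abs_mult) (metis abs_ge_zero mult_left_le_one_le order_trans abs_of_nonneg)
  ultimately show ?thesis unfolding plateau'_def by linarith
qed

lemma plateau_eq_1: "2 \<le> s \<Longrightarrow> s \<le> 3 \<Longrightarrow> plateau s = 1"
  using smoothstep_eq_1[of "s - 1"] smoothstep_eq_1[of "4 - s"] by (simp add: plateau_def)

lemma plateau_eq_0: "s \<le> 1 \<or> 4 \<le> s \<Longrightarrow> plateau s = 0 \<and> plateau' s = 0"
  using smoothstep_eq_0[of "s - 1"] smoothstep_eq_0[of "4 - s"] by (auto simp: plateau_def plateau'_def)

lemma continuous_on_plateau': "continuous_on UNIV plateau'"
  unfolding plateau'_def[abs_def]
  by (intro continuous_intros continuous_on_compose2[OF continuous_on_smoothstep'] continuous_on_compose2[OF continuous_on_smoothstep]) auto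

lemma continuous_on_plateau: "continuous_on UNIV plateau"
  using has_real_derivative_plateau by (meson DERIV_isCont continuous_at_imp_continuous_on)

definition cube_bump :: "real \<Rightarrow> real^'n \<Rightarrow> real" where
  "cube_bump R x = (\<Prod>j\<in>UNIV. plateau (x $ j / R))"

definition cube_bump_grad :: "real \<Rightarrow> real^'n \<Rightarrow> real^'n" where
  "cube_bump_grad R x = (\<chi> i. plateau' (x $ i / R) / R * (\<Prod>j\<in>UNIV - {i}. plateau (x $ j / R)))"

lemma has_derivative_cube_bump:
  fixes x :: "real^'n"
  shows "(cube_bump R has_derivative (\<lambda>v. cube_bump_grad R x \<bullet> v)) (at x)"
proof -
  have each: "((\<lambda>x. plateau (x $ i / R)) has_derivative (\<lambda>v. plateau' (x $ i / R) * (v $ i / R))) (at x)" for i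
  proof -
    have l: "((\<lambda>x::real^'n. x $ i / R) has_derivative (\<lambda>v. v $ i / R)) (at x)"
      by (intro bounded_linear_imp_has_derivative bounded_linear_compose[OF bounded_linear_divide bounded_linear_vec_nth])
    have "(plateau has_derivative (*) (plateau' (x $ i / R))) (at (x $ i / R))"
      using has_real_derivative_plateau by (simp add: has_field_derivative_def)
    from has_derivative_compose[OF l this] show ?thesis by simp
  qed
  have "(cube_bump R has_derivative (\<lambda>v. \<Sum>i\<in>UNIV. plateau' (x $ i / R) * (v $ i / R) * (\<Prod>j\<in>UNIV - {i}. plateau (x $ j / R)))) (at x)"
    unfolding cube_bump_def[abs_def] by (rule has_derivative_prod) (rule each)
  moreover have "(\<lambda>v. \<Sum>i\<in>UNIV. plateau' (x $ i / R) * (v $ i / R) * (\<Prod>j\<in>UNIV - {i}. plateau (x $ j / R))) = (\<lambda>v. cube_bump_grad R x \<bullet> v)"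
    by (auto simp: cube_bump_grad_def inner_vec_def fun_eq_iff intro!: sum.cong)
  ultimately show ?thesis by simp
qed

lemma norm_cube_bump_grad_le:
  fixes x :: "real^'n"
  assumes R: "R > 0"
  shows "norm (cube_bump_grad R x) \<le> 4 * real CARD('n) / R"
proof -
  have c: "\<bar>cube_bump_grad R x $ i\<bar> \<le> 4 / R" for i
  proof -
    have "0 \<le> (\<Prod>j\<in>UNIV - {i}. plateau (x $ j / R))" by (intro prod_nonneg) (simp add: plateau_range)
    moreover have "(\<Prod>j\<in>UNIV - {i}. plateau (x $ j / R)) \<le> 1" by (intro prod_le_1) (simp add: plateau_range)
    ultimately have "\<bar>plateau' (x $ i / R)\<bar> * (\<Prod>j\<in>UNIV - {i}. plateau (x $ j / R)) \<le> 4 * 1"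
      using abs_plateau'_le[of "x $ i / R"] by (intro mult_mono) auto
    then have "\<bar>plateau' (x $ i / R)\<bar> * (\<Prod>j\<in>UNIV - {i}. plateau (x $ j / R)) / R \<le> 4 / R"
      using R by (simp add: divide_right_mono)
    then have "\<bar>plateau' (x $ i / R) / R * (\<Prod>j\<in>UNIV - {i}. plateau (x $ j / R))\<bar> \<le> 4 / R"
      using R \<open>0 \<le> (\<Prod>j\<in>UNIV - {i}. plateau (x $ j / R))\<close> by (simp add: abs_mult)
    then show ?thesis by (simp add: cube_bump_grad_def)
  qed
  have "norm (cube_bump_grad R x) \<le> (\<Sum>i\<in>UNIV. \<bar>cube_bump_grad R x $ i\<bar>)" by (rule norm_le_l1_cart)
  also have "\<dots> \<le> (\<Sum>i\<in>(UNIV::'n set). 4 / R)" by (intro sum_mono c)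
  also have "\<dots> = 4 * real CARD('n) / R" by simp
  finally show ?thesis .
qed

lemma cube_bump_grad_eq_0:
  fixes x :: "real^'n"
  assumes R: "R > 0" and x: "x \<notin> cbox (\<chi> j. R) (\<chi> j. 4 * R :: real^'n)"
  shows "cube_bump_grad R x = 0"
proof -
  obtain j where j: "x $ j < R \<or> x $ j > 4 * R" using x by (auto simp: mem_box_cart not_le)
  then have z: "plateau (x $ j / R) = 0 \<and> plateau' (x $ j / R) = 0"
    using R by (intro plateau_eq_0) (auto simp: field_simps)
  show ?thesis
  proof (rule vec_eq_iff[THEN iffD2], rule allI)
    fix i
    show "cube_bump_grad R x $ i = 0 $ i"
    proof (cases "i = j")
      case True then show ?thesis using z by (simp add: cube_bump_grad_def)
    next
      case False
      then have "(\<Prod>k\<in>UNIV - {i}. plateau (x $ k / R)) = 0" using z by (intro prod_zero) auto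
      then show ?thesis by (simp add: cube_bump_grad_def)
    qed
  qed
qed

lemma cube_bump_eq_1:
  fixes x :: "real^'n"
  assumes R: "R > 0" and x: "x \<in> box (\<chi> j. 2 * R) (\<chi> j. 3 * R :: real^'n)"
  shows "cube_bump R x = 1"
proof -
  have "plateau (x $ j / R) = 1" for j
    using x R by (intro plateau_eq_1) (auto simp: mem_box_cart field_simps less_imp_le)
  then show ?thesis by (simp add: cube_bump_def)
qed

lemma cube_bump_eq_0:
  fixes x :: "real^'n"
  assumes R: "R > 0" and x: "\<forall>j. 4 * R < x $ j"
  shows "cube_bump R x = 0"
proof -
  have "plateau (x $ j / R) = 0" for j
    using x R by (intro plateau_eq_0[THEN conjunct1]) (auto simp: field_simps less_imp_le)
  then show ?thesis unfolding cube_bump_def by (intro prod_zero) auto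
qed

lemma continuous_on_cube_bump_grad: "continuous_on UNIV (cube_bump_grad R :: real^'n \<Rightarrow> real^'n)"
  unfolding cube_bump_grad_def[abs_def] divide_inverse
  by (intro continuous_on_vec_lambda continuous_intros continuous_on_compose2[OF continuous_on_plateau']
        continuous_on_compose2[OF continuous_on_plateau]) auto

section \<open>Large bumps in the orthant\<close>

lemma orthant_bump_norm_ratio:
  fixes p q C :: real and n :: nat
  defines "N \<equiv> real n"
  defines "K \<equiv> 4 * N * 3 powr (N / p)"
  defines "R \<equiv> ((C + 1) * K) powr (1 / (N / q - N / p + 1))"
  assumes n: "n \<ge> 1" and p: "p \<ge> 1" and q: "q \<ge> 1" and gap: "N / p - 1 < N / q" and C: "C \<ge> 0"
  shows "C * (4 * N / R * ((3 * R) ^ n) powr (1 / p)) < (R ^ n) powr (1 / q)"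
proof -
  define e where "e = N / q - N / p + 1"
  have N: "N > 0" using n by (simp add: N_def)
  have K: "K > 0" using N by (simp add: K_def)
  have R: "R > 0" using K C by (simp add: R_def)
  have Re: "R powr e = (C + 1) * K"
    using K C gap by (simp add: R_def e_def powr_powr)
  have Y: "4 * N / R * ((3 * R) ^ n) powr (1 / p) = K * R powr (N / p - 1)"
  proof -
    have "((3 * R) ^ n) powr (1 / p) = 3 powr (N / p) * R powr (N / p)"
      using R by (simp add: N_def powr_realpow[symmetric] powr_powr powr_mult)
    then show ?thesis
      using R by (simp add: K_def powr_diff)
  qed
  have X: "(R ^ n) powr (1 / q) = R powr e * R powr (N / p - 1)"
    using R by (simp add: N_def e_def powr_realpow[symmetric] powr_powr powr_add[symmetric])
  show ?thesis
    unfolding X Y Re using K R C by (simp add: algebra_simps)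
qed

lemma not_poincare_inequality_orthant:
  fixes G :: "(real^'n) set"
  assumes G: "open G" "open_orthant \<subseteq> G" and p: "1 \<le> p" and q: "1 \<le> q"
    and gap: "real CARD('n) / p - 1 < real CARD('n) / q"
  shows "\<not> poincare_inequality G p q C"
proof
  assume P: "poincare_inequality G p q C"
  define N where "N = real CARD('n)"
  define R where "R = ((max C 0 + 1) * (4 * N * 3 powr (N / p))) powr (1 / (N / q - N / p + 1))"
  have R0: "R > 0" by (simp add: R_def N_def)
  have G_meas: "G \<in> sets lebesgue" using G(1) by (simp add: borel_open)
  have "ennreal ((R ^ CARD('n)) powr (1 / q)) \<le> Lnorm G q (cube_bump R)"
  proof (rule Lnorm_ge_measure[OF G_meas])
    have "box (\<chi> j. 2 * R) (\<chi> j. 3 * R :: real^'n) \<subseteq> open_orthant"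
      using R0 by (auto simp: mem_box_cart open_orthant_def intro: less_trans[of 0 "2 * R"])
    then show "box (\<chi> j. 2 * R) (\<chi> j. 3 * R :: real^'n) \<subseteq> G"
      using G(2) by blast
    show "emeasure lebesgue (box (\<chi> j. 2 * R) (\<chi> j. 3 * R :: real^'n)) = ennreal (R ^ CARD('n))"
      using R0 by (subst emeasure_lebesgue_box_cart) auto
    show "1 \<le> \<bar>cube_bump R x\<bar>" if "x \<in> box (\<chi> j. 2 * R) (\<chi> j. 3 * R :: real^'n)" for x
      using cube_bump_eq_1[OF R0 that] by simp
  qed (use q R0 in auto)
  moreover have Y: "Lnorm G p (\<lambda>x. norm (cube_bump_grad R x))
      \<le> ennreal (4 * N / R * ((3 * R) ^ CARD('n)) powr (1 / p))"
  proof (rule Lnorm_le_measure[OF G_meas])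
    show "emeasure lebesgue (cbox (\<chi> j. R) (\<chi> j. 4 * R :: real^'n)) = ennreal ((3 * R) ^ CARD('n))"
      using R0 by (subst emeasure_lebesgue_box_cart) auto
    show "\<bar>norm (cube_bump_grad R x)\<bar> \<le> 4 * N / R" for x :: "real^'n"
      using norm_cube_bump_grad_le[OF R0, of x] by (simp add: N_def)
    show "x \<in> cbox (\<chi> j. R) (\<chi> j. 4 * R :: real^'n)" if "norm (cube_bump_grad R x) \<noteq> 0" for x
      using cube_bump_grad_eq_0[OF R0, of x] that by auto
  qed (use p R0 in \<open>auto simp: N_def\<close>)
  moreover have "in_L1p G p (cube_bump R) (cube_bump_grad R)"
    by (rule in_L1p_if_has_derivative[of UNIV])
       (use G has_derivative_cube_bump norm_cube_bump_grad_le[OF R0] borel_measurable_continuous_onI[OF continuous_on_cube_bump_grad]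
         le_less_trans[OF Y] in auto)
  ultimately have "(R ^ CARD('n)) powr (1 / q) \<le> max C 0 * (4 * N / R * ((3 * R) ^ CARD('n)) powr (1 / p))"
    using R0 cube_bump_eq_0[OF R0]
    by (intro poincare_inequality_test_bound[OF P G, of "4 * R"]) (auto simp: N_def)
  moreover have "max C 0 * (4 * N / R * ((3 * R) ^ CARD('n)) powr (1 / p)) < (R ^ CARD('n)) powr (1 / q)"
    unfolding R_def N_def using p q gap by (intro orthant_bump_norm_ratio) auto
  ultimately show False by simp
qed

lemma cap_eq_cbox:
  "cap a r d = cbox (\<chi> j. if j = a then - 3 * r else d $ j) (\<chi> j. if j = a then - r else d $ j + 2 * r)"
  by (auto simp: cap_def mem_box_cart split: if_splits)

lemma stem_eq_cbox:
  "stem a r w c = cbox (\<chi> j. if j = a then - r else c $ j) (\<chi> j. if j = a then 0 else c $ j + 2 * w)"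
  by (auto simp: stem_def mem_box_cart split: if_splits)

lemma compact_mushroom: "compact (mushroom a r w c d)"
  unfolding mushroom_def cap_eq_cbox stem_eq_cbox by (intro compact_Un compact_cbox)

lemma mushroom_component_ge: "0 \<le> r \<Longrightarrow> x \<in> mushroom a r w c d \<Longrightarrow> - 3 * r \<le> x $ a"
  by (auto simp: mushroom_def cap_def stem_def)

lemma mushroom_component_gt_other:
  assumes "placement_ok b r w c d" "a \<noteq> b" "0 \<le> w" "0 < r" "x \<in> mushroom b r w c d"
  shows "- 2 * r < x $ a"
  using assms by (auto simp: mushroom_def cap_def stem_def placement_ok_def) (smt (verit))+

lemma mem_stem_if_mushroom: "x \<in> mushroom a r w c d \<Longrightarrow> - r < x $ a \<Longrightarrow> x \<in> stem a r w c"
  by (auto simp: mushroom_def cap_def)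

text \<open>The pieces other than \<open>A m\<close> that meet \<open>H\<close> are finitely many and form a compact set disjoint
  from \<open>S\<close>.\<close>
lemma infdist_ge_outside_piece:
  fixes A B :: "nat \<Rightarrow> 'a::heine_borel set"
  assumes A: "\<And>k. compact (A k)" and B: "\<And>k. compact (B k)"
    and S: "compact S" "S \<noteq> {}" "S \<subseteq> A m"
    and disj: "\<And>k. k \<noteq> m \<Longrightarrow> A m \<inter> A k = {}" "\<And>k. A m \<inter> B k = {}"
    and tail: "\<And>k x. K \<le> k \<Longrightarrow> x \<in> H \<Longrightarrow> x \<notin> A k \<union> B k"
  obtains \<delta> where "\<delta> > 0" "\<And>x. x \<in> H \<Longrightarrow> x \<in> (\<Union>k. A k \<union> B k) \<Longrightarrow> x \<notin> A m \<Longrightarrow> \<delta> \<le> infdist x S"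
proof -
  define T where "T = (\<Union>k\<in>{k. k < K \<and> k \<noteq> m}. A k) \<union> (\<Union>k\<in>{..<K}. B k)"
  have "compact T" unfolding T_def using A B by (intro compact_Un compact_UN) auto
  moreover have "S \<inter> T = {}" unfolding T_def using S(3) disj by blast
  ultimately obtain \<delta> where \<delta>: "\<delta> > 0" "\<And>x y. x \<in> S \<Longrightarrow> y \<in> T \<Longrightarrow> \<delta> \<le> dist x y"
    using separate_compact_closed[OF S(1) compact_imp_closed] by metis
  have "\<delta> \<le> infdist x S" if x: "x \<in> H" "x \<in> (\<Union>k. A k \<union> B k)" "x \<notin> A m" for x
  proof -
    obtain k where k: "x \<in> A k \<union> B k" using x(2) by blast
    then have "k < K" using tail[of k x] x(1) by (meson not_le)
    then have "x \<in> T" using k x(3) unfolding T_def by (cases "k = m") auto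
    then show ?thesis
      using \<delta>(2) S(2) by (auto simp: infdist_notempty dist_commute intro!: cINF_greatest)
  qed
  with \<delta>(1) show ?thesis by (rule that)
qed

definition ramp :: "real \<Rightarrow> real \<Rightarrow> real" where
  "ramp r t = smoothstep ((- t - r / 4) / (3 * r / 4))"

definition ramp' :: "real \<Rightarrow> real \<Rightarrow> real" where
  "ramp' r t = smoothstep' ((- t - r / 4) / (3 * r / 4)) * (- 4 / (3 * r))"

lemma has_real_derivative_ramp: "0 < r \<Longrightarrow> (ramp r has_real_derivative ramp' r t) (at t)"
  unfolding ramp_def[abs_def] ramp'_def
  by (rule DERIV_chain2[OF has_real_derivative_smoothstep]) (auto intro!: derivative_eq_intros simp: field_simps)

lemma ramp_eq_0: "0 < r \<Longrightarrow> - r / 4 \<le> t \<Longrightarrow> ramp r t = 0 \<and> ramp' r t = 0"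
  using smoothstep_eq_0[of "(- t - r / 4) / (3 * r / 4)"]
  by (simp add: ramp_def ramp'_def divide_nonpos_pos)

lemma ramp_eq_1: "0 < r \<Longrightarrow> t \<le> - r \<Longrightarrow> ramp r t = 1 \<and> ramp' r t = 0"
  using smoothstep_eq_1[of "(- t - r / 4) / (3 * r / 4)"]
  by (simp add: ramp_def ramp'_def field_simps)

lemma abs_ramp'_le: "0 < r \<Longrightarrow> \<bar>ramp' r t\<bar> \<le> 3 / r"
  using abs_smoothstep'_le[of "(- t - r / 4) / (3 * r / 4)"]
  by (simp add: ramp'_def abs_mult field_simps)

lemma continuous_on_ramp': "0 < r \<Longrightarrow> continuous_on UNIV (ramp' r)"
  unfolding ramp'_def[abs_def]
  by (intro continuous_intros continuous_on_compose2[OF continuous_on_smoothstep']) auto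

lemma has_derivative_if_open:
  fixes f :: "'a::real_normed_vector \<Rightarrow> 'b::real_normed_vector"
  assumes opn: "open W" "open E" "open H" and WE: "W \<inter> E = {}"
    and f': "x \<in> W \<Longrightarrow> (f has_derivative f') (at x)" and f0: "\<And>y. y \<in> H \<Longrightarrow> f y = 0"
    and x: "x \<in> H \<union> W \<union> E"
  shows "((\<lambda>y. if y \<in> W then f y else 0) has_derivative (if x \<in> W then f' else (\<lambda>v. 0))) (at x)"
proof (cases "x \<in> W")
  case True
  with opn(1) f' show ?thesis
    by (auto intro: has_derivative_transform_within_open[of f _ _ _ W])
next
  case False
  then have "x \<in> H \<or> x \<in> E" using x by blast
  then have "((\<lambda>y. if y \<in> W then f y else 0) has_derivative (\<lambda>v. 0)) (at x)"
  proof
    assume "x \<in> H"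
    show ?thesis
      by (rule has_derivative_transform_within_open[of "\<lambda>y. 0" _ _ _ H])
         (use \<open>x \<in> H\<close> opn(3) f0 in auto)
  next
    assume "x \<in> E"
    show ?thesis
      by (rule has_derivative_transform_within_open[of "\<lambda>y. 0" _ _ _ E])
         (use \<open>x \<in> E\<close> opn(2) WE in auto)
  qed
  with False show ?thesis by simp
qed

text \<open>Near the part \<open>S\<close> of \<open>M\<close> the cutoff follows the ramp in the coordinate \<open>a\<close>; elsewhere it
  is \<open>0\<close>. The separation hypothesis makes the two definitions agree on an open cover of \<open>G\<close>.\<close>
lemma exists_cutoff:
  fixes G M S :: "(real^'n) set" and a :: 'n
  assumes r: "0 < r" and \<delta>: "0 < \<delta>"
    and S: "S = M \<inter> {x. x $ a \<le> - r / 8}"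
    and sep: "\<And>x. x \<in> G \<Longrightarrow> x $ a \<le> - r / 8 \<Longrightarrow> x \<notin> M \<Longrightarrow> \<delta> \<le> infdist x S"
  obtains V u g where "open V" "G \<subseteq> V" "\<And>x. x \<in> V \<Longrightarrow> (u has_derivative (\<lambda>v. g x \<bullet> v)) (at x)"
    "g \<in> borel_measurable borel" "\<And>x. norm (g x) \<le> 3 / r"
    "\<And>x. x \<in> G \<Longrightarrow> g x \<noteq> 0 \<Longrightarrow> x \<in> M \<and> - r < x $ a"
    "\<And>x. x \<in> M \<Longrightarrow> x $ a < - r \<Longrightarrow> u x = 1"
    "\<And>x. - r / 4 \<le> x $ a \<Longrightarrow> u x = 0"
proof -
  define W where "W = {x. infdist x S < \<delta> / 2}"
  define E where "E = {x. \<delta> / 2 < infdist x S}"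
  define H where "H = {x::real^'n. - r / 4 < x $ a}"
  define u where "u x = (if x \<in> W then ramp r (x $ a) else 0)" for x
  define g where "g x = (if x \<in> W then ramp' r (x $ a) *\<^sub>R axis a (1::real) else 0)" for x :: "real^'n"
  have open_sets: "open W" "open E" "open H"
    unfolding W_def E_def H_def by (auto intro!: open_Collect_less continuous_intros)
  have "G \<subseteq> H \<union> W \<union> E"
  proof
    fix x assume "x \<in> G"
    then show "x \<in> H \<union> W \<union> E"
      using sep[of x] \<delta> r by (cases "x \<in> M") (auto simp: H_def W_def E_def S)
  qed
  moreover have "(u has_derivative (\<lambda>v. g x \<bullet> v)) (at x)" if x: "x \<in> H \<union> W \<union> E" for x
  proof -
    have ramp: "((\<lambda>y. ramp r (y $ a)) has_derivative (\<lambda>v. ramp' r (x $ a) * v $ a)) (at x)"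
      using has_derivative_compose[OF bounded_linear_imp_has_derivative[OF bounded_linear_vec_nth]
          has_real_derivative_ramp[OF r, unfolded has_field_derivative_def]]
      by blast
    have "(u has_derivative (if x \<in> W then (\<lambda>v. ramp' r (x $ a) * v $ a) else (\<lambda>v. 0))) (at x)"
      unfolding u_def[abs_def]
    proof (rule has_derivative_if_open[OF open_sets _ _ _ x])
      show "W \<inter> E = {}" by (auto simp: W_def E_def)
      show "ramp r (y $ a) = 0" if "y \<in> H" for y
        using ramp_eq_0[OF r, of "y $ a"] that by (simp add: H_def)
    qed (rule ramp)
    moreover have "(if x \<in> W then (\<lambda>v. ramp' r (x $ a) * v $ a) else (\<lambda>v. 0)) = (\<lambda>v. g x \<bullet> v)"
      by (auto simp: g_def inner_axis')
    ultimately show ?thesis by simp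
  qed
  moreover have "g \<in> borel_measurable borel"
    unfolding g_def
    by (rule borel_measurable_continuous_on_if)
       (use open_sets in \<open>auto simp: borel_open intro!: continuous_intros
          continuous_on_compose2[OF continuous_on_ramp'[OF r]]\<close>)
  moreover have "norm (g x) \<le> 3 / r" for x
    using abs_ramp'_le[OF r, of "x $ a"] r by (auto simp: g_def)
  moreover have "x \<in> M \<and> - r < x $ a" if x: "x \<in> G" "g x \<noteq> 0" for x
  proof -
    have "x \<in> W" "ramp' r (x $ a) \<noteq> 0"
      using x(2) by (auto simp: g_def split: if_splits)
    then have "x \<in> W" "- r < x $ a" "x $ a < - r / 4"
      using ramp_eq_0[OF r, of "x $ a"] ramp_eq_1[OF r, of "x $ a"] by (auto simp: not_le[symmetric])
    then show ?thesis using sep[OF x(1)] \<delta> r by (force simp: W_def)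
  qed
  moreover have "u x = 1" if x: "x \<in> M" "x $ a < - r" for x
  proof -
    have "x \<in> S" using x r by (simp add: S)
    then have "x \<in> W" using \<delta> by (simp add: W_def)
    then show ?thesis using ramp_eq_1[OF r, of "x $ a"] x(2) by (simp add: u_def)
  qed
  moreover have "u x = 0" if x: "- r / 4 \<le> x $ a" for x
    using ramp_eq_0[OF r x] by (simp add: u_def)
  ultimately show ?thesis
    using that[of "H \<union> W \<union> E" u g] open_sets by blast
qed

lemma emeasure_stem:
  "0 \<le> r \<Longrightarrow> 0 \<le> w \<Longrightarrow>
    emeasure lebesgue (stem a r w c) = ennreal (r * (2 * w) ^ (CARD('n) - 1))"
  for c :: "real^'n"
proof -
  assume "0 \<le> r" "0 \<le> w"
  then have "emeasure lebesgue (stem a r w c) = ennreal (\<Prod>i\<in>UNIV. if i = a then r else 2 * w)"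
    unfolding stem_eq_cbox
    by (subst emeasure_lebesgue_box_cart) (auto intro!: arg_cong[where f=ennreal] prod.cong)
  also have "(\<Prod>i\<in>UNIV. if i = a then r else 2 * w) = r * (2 * w) ^ (CARD('n) - 1)"
    by (subst prod.remove[of UNIV a]) (auto simp: card_Diff_singleton)
  finally show ?thesis .
qed

lemma emeasure_interior_cap:
  "0 \<le> r \<Longrightarrow> emeasure lebesgue (interior (cap a r d)) = ennreal ((2 * r) ^ CARD('n))"
  for d :: "real^'n"
proof -
  assume "0 \<le> r"
  have "(\<Prod>i\<in>UNIV. (if i = a then - r else d $ i + 2 * r) - (if i = a then - 3 * r else d $ i))
      = (\<Prod>i\<in>(UNIV::'n set). 2 * r)"
    by (rule prod.cong) auto
  with \<open>0 \<le> r\<close> show ?thesis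
    unfolding cap_eq_cbox interior_cbox by (subst emeasure_lebesgue_box_cart) auto
qed

section \<open>Mushroom domains\<close>

lemma mushroom_norm_ratio:
  fixes p q C r w :: real and n :: nat
  defines "N \<equiv> real n"
  assumes n: "n \<ge> 2" and p: "p \<ge> 1" and pq: "N / q \<le> N / p - 1"
    and r: "0 < r" "2 * r \<le> 1" and w: "0 < w" and C: "C \<ge> 0"
    and thin: "(w / r) powr ((N - 1) / p) < 1 / (6 * (C + 1))"
  shows "C * (3 / r * (r * (2 * w) ^ (n - 1)) powr (1 / p)) < ((2 * r) ^ n) powr (1 / q)"
proof -
  define A where "A = r powr (N / p - 1)"
  define S where "S = (w / r) powr ((N - 1) / p)"
  have A: "A > 0" using r by (simp add: A_def)
  have S: "S \<ge> 0" by (simp add: S_def)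
  have "2 powr (N / p - 1) * A = (2 * r) powr (N / p - 1)"
    using r by (simp add: powr_mult A_def)
  also have "\<dots> \<le> (2 * r) powr (N / q)"
    using pq r by (intro powr_mono') auto
  also have "\<dots> = ((2 * r) ^ n) powr (1 / q)"
  proof -
    have "(2 * r) ^ n = (2 * r) powr N" using r by (simp add: N_def powr_realpow)
    then show ?thesis using r by (simp add: powr_powr)
  qed
  finally have X: "2 powr (N / p - 1) * A \<le> ((2 * r) ^ n) powr (1 / q)" .
  have "(r * (2 * w) ^ (n - 1)) powr (1 / p) = r powr (1 / p) * (2 * w) powr ((N - 1) / p)"
    using r w n by (simp add: N_def powr_mult powr_realpow[symmetric] powr_powr of_nat_diff)
  also have "(2 * w) powr ((N - 1) / p) = 2 powr ((N - 1) / p) * S * r powr ((N - 1) / p)"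
    using r w by (simp add: S_def powr_mult[symmetric])
  finally have "3 / r * (r * (2 * w) ^ (n - 1)) powr (1 / p)
      = 3 * 2 powr ((N - 1) / p) * S * (r powr (1 / p) * r powr ((N - 1) / p) / r)"
    by simp
  also have "r powr (1 / p) * r powr ((N - 1) / p) / r = A"
    using r by (simp add: A_def powr_add[symmetric] powr_diff add_divide_distrib[symmetric])
  also have "2 powr ((N - 1) / p) = 2 powr (N / p - 1) * 2 powr (1 - 1 / p)"
    using p by (simp add: powr_add[symmetric] diff_divide_distrib)
  finally have Y: "3 / r * (r * (2 * w) ^ (n - 1)) powr (1 / p)
      = 3 * 2 powr (1 - 1 / p) * S * (2 powr (N / p - 1) * A)"
    by (simp add: algebra_simps)
  have "2 powr (1 - 1 / p) \<le> 2"
    using powr_mono[of "1 - 1 / p" 1 2] p by simp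
  then have "C * (3 * 2 powr (1 - 1 / p) * S) \<le> C * (3 * 2 * S)"
    using C S by (intro mult_left_mono mult_right_mono) auto
  also have "\<dots> \<le> 6 * (C + 1) * S"
    using S by (simp add: algebra_simps)
  also have "\<dots> < 1"
    using thin C by (simp add: S_def field_simps)
  finally have "C * (3 * 2 powr (1 - 1 / p) * S) * (2 powr (N / p - 1) * A) < 2 powr (N / p - 1) * A"
    using A by simp
  with X Y show ?thesis by (simp add: algebra_simps)
qed

locale mushroom_domain =
  fixes \<phi> :: "real \<Rightarrow> real" and a b :: "'n::finite" and r :: "nat \<Rightarrow> real"
    and c d cs ds :: "nat \<Rightarrow> real^'n" and G :: "(real^'n) set"
  assumes ab: "a \<noteq> b" and phi: "admissible_phi \<phi>"
    and r_pos: "\<And>m. 0 < r m" and r_lim: "r \<longlonglongrightarrow> 0"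
    and place_s: "\<And>m. placement_ok b (r m) (\<phi> (r m)) (cs m) (ds m)"
    and disj: "\<And>m k. m \<noteq> k \<Longrightarrow>
        mushroom a (r m) (\<phi> (r m)) (c m) (d m) \<inter> mushroom a (r k) (\<phi> (r k)) (c k) (d k) = {}"
    and disj_as: "\<And>m k.
        mushroom a (r m) (\<phi> (r m)) (c m) (d m) \<inter> mushroom b (r k) (\<phi> (r k)) (cs k) (ds k) = {}"
    and G: "G = interior (open_orthant \<union>
        (\<Union>m. mushroom a (r m) (\<phi> (r m)) (c m) (d m) \<union> mushroom b (r m) (\<phi> (r m)) (cs m) (ds m)))"
begin

abbreviation "mushroom_a k \<equiv> mushroom a (r k) (\<phi> (r k)) (c k) (d k)"
abbreviation "mushroom_b k \<equiv> mushroom b (r k) (\<phi> (r k)) (cs k) (ds k)"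

lemma phi_pos: "0 < t \<Longrightarrow> 0 < \<phi> t"
  using phi strict_mono_onD[of "{0..}" \<phi> 0 t] unfolding admissible_phi_def by auto

lemma open_G: "open G"
  unfolding G by simp

lemma orthant_subset_G: "open_orthant \<subseteq> G"
  unfolding G using open_shifted_orthant[of 0]
  by (intro interior_maximal) (auto simp: open_orthant_def)

lemma interior_cap_subset_G: "interior (cap a (r m) (d m)) \<subseteq> G"
  unfolding G by (intro interior_mono) (auto simp: mushroom_def)

lemma thin_stem_index:
  assumes phi_lim: "filterlim (\<lambda>t. t / \<phi> t) at_top (at_right 0)" and "0 < e" "0 < \<epsilon>"
  obtains m where "r m < 1 / 2" "(\<phi> (r m) / r m) powr e < \<epsilon>"
proof -
  have "filterlim r (at_right 0) sequentially"
    using r_lim r_pos by (intro tendsto_imp_filterlim_at_right) auto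
  from filterlim_compose[OF phi_lim this]
  have "((\<lambda>k. inverse (r k / \<phi> (r k))) \<longlongrightarrow> 0) sequentially"
    by (intro tendsto_inverse_0_at_top) (simp add: o_def)
  then have "((\<lambda>k. (\<phi> (r k) / r k) powr e) \<longlongrightarrow> 0) sequentially"
    using \<open>0 < e\<close> phi_pos r_pos by (intro tendsto_zero_powrI) (auto intro!: always_eventually less_imp_le)
  then have "eventually (\<lambda>k. (\<phi> (r k) / r k) powr e < \<epsilon>) sequentially"
    using \<open>0 < \<epsilon>\<close> by (rule order_tendstoD)
  moreover have "eventually (\<lambda>k. r k < 1 / 2) sequentially"
    using r_lim by (rule order_tendstoD) simp
  ultimately obtain m where "(\<phi> (r m) / r m) powr e < \<epsilon>" "r m < 1 / 2"
    using eventually_happens'[OF sequentially_bot eventually_conj] by blast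
  then show ?thesis by (rule that[rotated])
qed

text \<open>All mushrooms reach at most depth \<open>3 r k\<close> below the face of the orthant, and \<open>r k \<rightarrow> 0\<close>;
  so at depth \<open>r m / 8\<close> only finitely many of them are present.\<close>
lemma cap_part_separated:
  obtains \<delta> where "0 < \<delta>"
    "\<And>x. x \<in> G \<Longrightarrow> x $ a \<le> - r m / 8 \<Longrightarrow> x \<notin> mushroom_a m \<Longrightarrow>
      \<delta> \<le> infdist x (mushroom_a m \<inter> {x. x $ a \<le> - r m / 8})"
proof -
  define H where "H = {x::real^'n. x $ a \<le> - r m / 8}"
  define S where "S = mushroom_a m \<inter> H"
  obtain K where K: "\<And>k. K \<le> k \<Longrightarrow> r k < r m / 24"
    using order_tendstoD(2)[OF r_lim, of "r m / 24"] r_pos[of m] by (auto simp: eventually_sequentially)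
  have "(\<chi> j. if j = a then - 2 * r m else d m $ j) \<in> S"
    using r_pos[of m] by (auto simp: S_def H_def mushroom_def cap_def)
  then have S_ne: "S \<noteq> {}" by blast
  have S_comp: "compact S"
    unfolding S_def H_def by (intro compact_Int_closed compact_mushroom closed_Collect_le continuous_intros)
  have tail: "x \<notin> mushroom_a k \<union> mushroom_b k" if k: "K \<le> k" and x: "x \<in> H" for k x
  proof -
    have "x $ a < - 3 * r k" using K[OF k] x by (simp add: H_def)
    moreover have "- 3 * r k \<le> x $ a" if "x \<in> mushroom_a k"
      using mushroom_component_ge[OF _ that] r_pos[of k] by simp
    moreover have "- 2 * r k < x $ a" if "x \<in> mushroom_b k"
      using mushroom_component_gt_other[OF place_s ab _ r_pos that] phi_pos[OF r_pos[of k]] by simp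
    ultimately show ?thesis using r_pos[of k] by force
  qed
  obtain \<delta> where "0 < \<delta>" and \<delta>: "\<And>x. x \<in> H \<Longrightarrow>
      x \<in> (\<Union>k. mushroom_a k \<union> mushroom_b k) \<Longrightarrow> x \<notin> mushroom_a m \<Longrightarrow> \<delta> \<le> infdist x S"
    by (rule infdist_ge_outside_piece[OF compact_mushroom compact_mushroom S_comp S_ne _ disj disj_as tail])
       (auto simp: S_def)
  have "x \<in> (\<Union>k. mushroom_a k \<union> mushroom_b k)" if "x \<in> G" "x \<in> H" for x
  proof -
    have "x \<notin> open_orthant"
      using that(2) r_pos[of m] by (auto simp: H_def open_orthant_def intro!: exI[of _ a])
    with that(1) show ?thesis using interior_subset unfolding G by blast
  qed
  with \<open>0 < \<delta>\<close> \<delta> show ?thesis unfolding S_def H_def by (intro that) auto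
qed

lemma cap_cutoff:
  assumes p: "1 \<le> p" and q: "1 \<le> q"
  obtains u g where "in_L1p G p u g" "\<And>x. \<forall>j. 0 < x $ j \<Longrightarrow> u x = 0"
    "ennreal (((2 * r m) ^ CARD('n)) powr (1 / q)) \<le> Lnorm G q u"
    "Lnorm G p (\<lambda>x. norm (g x)) \<le> ennreal (3 / r m * (r m * (2 * \<phi> (r m)) ^ (CARD('n) - 1)) powr (1 / p))"
proof -
  define \<rho> where "\<rho> = r m"
  define w where "w = \<phi> \<rho>"
  have \<rho>: "0 < \<rho>" using r_pos by (simp add: \<rho>_def)
  have w: "0 < w" using phi_pos \<rho> by (simp add: w_def)
  obtain \<delta> where \<delta>: "0 < \<delta>" "\<And>x. x \<in> G \<Longrightarrow> x $ a \<le> - \<rho> / 8 \<Longrightarrow> x \<notin> mushroom_a m \<Longrightarrow>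
      \<delta> \<le> infdist x (mushroom_a m \<inter> {x. x $ a \<le> - \<rho> / 8})"
    using cap_part_separated[of m] unfolding \<rho>_def by blast
  obtain V u g where V: "open V" "G \<subseteq> V" and du: "\<And>x. x \<in> V \<Longrightarrow> (u has_derivative (\<lambda>v. g x \<bullet> v)) (at x)"
    and g_meas: "g \<in> borel_measurable borel" and g_bound: "\<And>x. norm (g x) \<le> 3 / \<rho>"
    and g_supp: "\<And>x. x \<in> G \<Longrightarrow> g x \<noteq> 0 \<Longrightarrow> x \<in> mushroom_a m \<and> - \<rho> < x $ a"
    and u_cap: "\<And>x. x \<in> mushroom_a m \<Longrightarrow> x $ a < - \<rho> \<Longrightarrow> u x = 1"
    and u_zero: "\<And>x. - \<rho> / 4 \<le> x $ a \<Longrightarrow> u x = 0"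
    using exists_cutoff[where G=G, OF \<rho> \<delta>(1) refl \<delta>(2)] by blast
  have G_meas: "G \<in> sets lebesgue" using open_G by (simp add: borel_open)
  have X: "ennreal (((2 * \<rho>) ^ CARD('n)) powr (1 / q)) \<le> Lnorm G q u"
  proof (rule Lnorm_ge_measure[OF G_meas])
    show "interior (cap a \<rho> (d m)) \<subseteq> G" using interior_cap_subset_G[of m] by (simp add: \<rho>_def)
    show "interior (cap a \<rho> (d m)) \<in> sets lebesgue" by (simp add: borel_open)
    show "emeasure lebesgue (interior (cap a \<rho> (d m))) = ennreal ((2 * \<rho>) ^ CARD('n))"
      using \<rho> by (intro emeasure_interior_cap) simp
    show "1 \<le> \<bar>u x\<bar>" if x: "x \<in> interior (cap a \<rho> (d m))" for x
    proof -
      have "x \<in> cap a \<rho> (d m)" using x interior_subset[of "cap a \<rho> (d m)"] by blast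
      then have "x \<in> mushroom_a m" by (simp add: mushroom_def \<rho>_def)
      moreover have "x $ a < (\<chi> j. if j = a then - \<rho> else d m $ j + 2 * \<rho>) $ a"
        using x unfolding cap_eq_cbox interior_cbox mem_box_cart by blast
      then have "x $ a < - \<rho>" by simp
      ultimately show ?thesis using u_cap by simp
    qed
  qed (use \<rho> q in auto)
  have Y: "Lnorm G p (\<lambda>x. norm (g x)) \<le> ennreal (3 / \<rho> * (\<rho> * (2 * w) ^ (CARD('n) - 1)) powr (1 / p))"
  proof (rule Lnorm_le_measure[OF G_meas])
    show "stem a \<rho> w (c m) \<in> sets lebesgue" by (simp add: stem_eq_cbox)
    show "x \<in> stem a \<rho> w (c m)" if "x \<in> G" "norm (g x) \<noteq> 0" for x
      using g_supp[OF that(1)] that(2) mem_stem_if_mushroom[of x] by (auto simp: \<rho>_def w_def)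
  qed (use \<rho> w p g_bound emeasure_stem[of \<rho> w] in auto)
  have "in_L1p G p u g"
    using le_less_trans[OF Y] by (intro in_L1p_if_has_derivative[OF V open_G du g_bound g_meas]) auto
  moreover have "u x = 0" if "\<forall>j. 0 < x $ j" for x
    using u_zero[of x] spec[OF that, of a] \<rho> by simp
  ultimately show ?thesis using X Y unfolding \<rho>_def w_def by (rule that)
qed

lemma not_poincare_inequality:
  assumes dim: "CARD('n) \<ge> 2" and p: "1 \<le> p" and q: "1 \<le> q"
    and pq: "real CARD('n) / q \<le> real CARD('n) / p - 1"
    and phi_lim: "filterlim (\<lambda>t. t / \<phi> t) at_top (at_right 0)"
  shows "\<not> poincare_inequality G p q C"
proof
  assume P: "poincare_inequality G p q C"
  define N where "N = real CARD('n)"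
  obtain m where m: "r m < 1 / 2" "(\<phi> (r m) / r m) powr ((N - 1) / p) < 1 / (6 * (max C 0 + 1))"
  proof (rule thin_stem_index[OF phi_lim])
    show "0 < (N - 1) / p" using dim p by (simp add: N_def)
    show "0 < 1 / (6 * (max C 0 + 1))" by (simp add: add_pos_nonneg)
  qed
  define X where "X = ((2 * r m) ^ CARD('n)) powr (1 / q)"
  define Y where "Y = 3 / r m * (r m * (2 * \<phi> (r m)) ^ (CARD('n) - 1)) powr (1 / p)"
  obtain u g where u: "in_L1p G p u g" "\<And>x. \<forall>j. 0 < x $ j \<Longrightarrow> u x = 0"
    and X: "ennreal X \<le> Lnorm G q u" and Y: "Lnorm G p (\<lambda>x. norm (g x)) \<le> ennreal Y"
    using cap_cutoff[OF p q, of m] unfolding X_def Y_def by blast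
  have "X \<le> max C 0 * Y"
    by (rule poincare_inequality_test_bound[OF P open_G orthant_subset_G order_refl u(2,1) X Y])
       (use r_pos[of m] in \<open>auto simp: Y_def intro!: mult_nonneg_nonneg\<close>)
  moreover have "max C 0 * Y < X"
    unfolding X_def Y_def using dim p pq m r_pos[of m] phi_pos[OF r_pos[of m]]
    by (intro mushroom_norm_ratio) (auto simp: N_def)
  ultimately show False by simp
qed

end

theorem theorem6p1:
  fixes \<phi> :: "real \<Rightarrow> real" and p :: real
    and a b :: "'n::finite" and r :: "nat \<Rightarrow> real"
    and c d cs ds :: "nat \<Rightarrow> real^'n"
    and G :: "(real^'n) set"
  assumes dim: "CARD('n) \<ge> 2" and ab: "a \<noteq> b"
    and p: "1 \<le> p" "p < real CARD('n)"
    and phi: "admissible_phi \<phi>"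
    and phi_lim: "filterlim (\<lambda>t. t / \<phi> t) at_top (at_right 0)"
    and r_pos: "\<And>m. 0 < r m" and r_dec: "decseq r" and r_lim: "r \<longlonglongrightarrow> 0"
    and r_phi: "\<And>m. \<phi> (r m) \<le> r m"
    and place: "\<And>m. placement_ok a (r m) (\<phi> (r m)) (c m) (d m)"
    and place_s: "\<And>m. placement_ok b (r m) (\<phi> (r m)) (cs m) (ds m)"
    and disj: "\<And>m k. m \<noteq> k \<Longrightarrow>
        mushroom a (r m) (\<phi> (r m)) (c m) (d m) \<inter> mushroom a (r k) (\<phi> (r k)) (c k) (d k) = {}"
    and disj_s: "\<And>m k. m \<noteq> k \<Longrightarrow>
        mushroom b (r m) (\<phi> (r m)) (cs m) (ds m) \<inter> mushroom b (r k) (\<phi> (r k)) (cs k) (ds k) = {}"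
    and disj_as: "\<And>m k.
        mushroom a (r m) (\<phi> (r m)) (c m) (d m) \<inter> mushroom b (r k) (\<phi> (r k)) (cs k) (ds k) = {}"
    and dist: "\<And>m. 1 \<le> infdist 0 (mushroom a (r m) (\<phi> (r m)) (c m) (d m)) \<and>
                    infdist 0 (mushroom a (r m) (\<phi> (r m)) (c m) (d m)) \<le> 4"
    and dist_s: "\<And>m. 1 \<le> infdist 0 (mushroom b (r m) (\<phi> (r m)) (cs m) (ds m)) \<and>
                    infdist 0 (mushroom b (r m) (\<phi> (r m)) (cs m) (ds m)) \<le> 4"
    and G: "G = interior (open_orthant \<union>
        (\<Union>m. mushroom a (r m) (\<phi> (r m)) (c m) (d m) \<union> mushroom b (r m) (\<phi> (r m)) (cs m) (ds m)))"
  shows "\<not> (\<exists>q C. 1 \<le> q \<and>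
            (\<forall>u g. in_L1p G p u g \<longrightarrow>
               (INF \<beta>::real. Lnorm G q (\<lambda>x. u x - \<beta>)) \<le> ennreal C * Lnorm G p (\<lambda>x. norm (g x))))"
proof -
  interpret mushroom_domain \<phi> a b r c d cs ds G
    by (rule mushroom_domain.intro) fact+
  have "\<not> poincare_inequality G p q C" if q: "1 \<le> q" for q C
  proof (cases "real CARD('n) / p - 1 < real CARD('n) / q")
    case True
    then show ?thesis by (rule not_poincare_inequality_orthant[OF open_G orthant_subset_G p(1) q])
  next
    case False
    then show ?thesis by (intro not_poincare_inequality[OF dim p(1) q _ phi_lim]) simp
  qed
  then show ?thesis unfolding poincare_inequality_def by blast
qed

end
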